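(* There is an algorithm which, given a propositional Hilbert-type calculus $\mathbf{C}$ and a positive integer $m$, computes all $m$-valued covers $\mathbf{M}$ of $\mathbf{C}$ with $V(\mathbf{M})=\{1,\ldots,m\}$ that are minimal with respect to $\lhd$ among such covers (i.e., there is no $m$-valued cover $\mathbf{M}'$ of $\mathbf{C}$ with $V(\mathbf{M}')=\{1,\ldots,m\}$ and $\mathbf{M}'\lhd\mathbf{M}$).
   Context: A propositional language has variables $X_1,X_2,\ldots$ and finitely many connectives with arities. A propositional Hilbert-type calculus $\mathbf{C}$ is given by a finite set of axioms (formulas) and a finite set of rules, each consisting of finitely many premise formulas and a conclusion formula. An $m$-valued logic $\mathbf{M}$ is given by a set $V(\mathbf{M})$ of $m$ truth values, designated values $V^+(\mathbf{M})\subseteq V(\mathbf{M})$, and a truth function for each connective; valuations map variables to truth values and extend to formulas; a valuation satisfies $F$ if $F$ gets a designated value; a tautology is a formula satisfied by every valuation; $\mathrm{Taut}(\mathbf{M})$ is the set of tautologies. $\mathbf{M}$ is a cover for $\mathbf{C}$ ($\mathbf{C}$ is strongly sound for $\mathbf{M}$) if every axiom of $\mathbf{C}$ is a tautology of $\mathbf{M}$ and, for every rule of $\mathbf{C}$, every valuation satisfying all premises satisfies the conclusion. $\mathbf{M}_1\lhd\mathbf{M}_2$ means $\mathrm{Taut}(\mathbf{M}_1)\subsetneq\mathrm{Taut}(\mathbf{M}_2)$. *)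

theory Defs
  imports Main "HOL-Library.Nat_Bijection"
begin

datatype recf = Z | S | Id nat | Cn recf "recf list" | Pr recf recf | Mn recf

inductive rf_eval :: "recf \<Rightarrow> nat list \<Rightarrow> nat \<Rightarrow> bool" where
  rf_Z: "rf_eval Z xs 0"
| rf_S: "rf_eval S (x # xs) (Suc x)"
| rf_Id: "i < length xs \<Longrightarrow> rf_eval (Id i) xs (xs ! i)"
| rf_Cn: "list_all2 (\<lambda>g y. rf_eval g xs y) gs ys \<Longrightarrow> rf_eval f ys z \<Longrightarrow> rf_eval (Cn f gs) xs z"
| rf_Pr0: "rf_eval f xs z \<Longrightarrow> rf_eval (Pr f g) (0 # xs) z"
| rf_PrS: "rf_eval (Pr f g) (n # xs) r \<Longrightarrow> rf_eval g (r # n # xs) z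
           \<Longrightarrow> rf_eval (Pr f g) (Suc n # xs) z"
| rf_Mn: "rf_eval f (n # xs) 0 \<Longrightarrow> (\<forall>k<n. \<exists>v. v > 0 \<and> rf_eval f (k # xs) v)
           \<Longrightarrow> rf_eval (Mn f) xs n"

text \<open>A language is given by the list of arities of its connectives (connective c has
arity ar ! c, for c < length ar). Variables X_1, X_2, ... are Var 0, Var 1, ...\<close>

datatype form = Var nat | App nat "form list"

fun wf_form :: "nat list \<Rightarrow> form \<Rightarrow> bool" where
  "wf_form ar (Var n) = True"
| "wf_form ar (App c fs) = (c < length ar \<and> length fs = ar ! c \<and> (\<forall>f\<in>set fs. wf_form ar f))"

definition wf_calc :: "nat list \<Rightarrow> form list \<Rightarrow> (form list \<times> form) list \<Rightarrow> bool" where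
  "wf_calc ar axs rls \<longleftrightarrow> (\<forall>a\<in>set axs. wf_form ar a) \<and>
     (\<forall>(ps, c)\<in>set rls. (\<forall>p\<in>set ps. wf_form ar p) \<and> wf_form ar c)"

text \<open>A logic is a pair (designated values, truth functions); truth function of connective c
applied to the argument list.\<close>

type_synonym logic = "nat set \<times> (nat \<Rightarrow> nat list \<Rightarrow> nat)"

definition is_logic :: "nat list \<Rightarrow> nat \<Rightarrow> logic \<Rightarrow> bool" where
  "is_logic ar m M \<longleftrightarrow> fst M \<subseteq> {1..m} \<and>
     (\<forall>c<length ar. \<forall>args. length args = ar ! c \<and> set args \<subseteq> {1..m} \<longrightarrow> snd M c args \<in> {1..m})"

fun evalf :: "(nat \<Rightarrow> nat list \<Rightarrow> nat) \<Rightarrow> (nat \<Rightarrow> nat) \<Rightarrow> form \<Rightarrow> nat" where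
  "evalf F v (Var n) = v n"
| "evalf F v (App c fs) = F c (map (evalf F v) fs)"

definition valuation :: "nat \<Rightarrow> (nat \<Rightarrow> nat) \<Rightarrow> bool" where
  "valuation m v \<longleftrightarrow> (\<forall>n. v n \<in> {1..m})"

definition satisfies :: "logic \<Rightarrow> (nat \<Rightarrow> nat) \<Rightarrow> form \<Rightarrow> bool" where
  "satisfies M v F \<longleftrightarrow> evalf (snd M) v F \<in> fst M"

definition Taut :: "nat list \<Rightarrow> nat \<Rightarrow> logic \<Rightarrow> form set" where
  "Taut ar m M = {F. wf_form ar F \<and> (\<forall>v. valuation m v \<longrightarrow> satisfies M v F)}"

definition is_cover :: "nat list \<Rightarrow> nat \<Rightarrow> form list \<Rightarrow> (form list \<times> form) list \<Rightarrow> logic \<Rightarrow> bool" where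
  "is_cover ar m axs rls M \<longleftrightarrow> (\<forall>a\<in>set axs. a \<in> Taut ar m M) \<and>
     (\<forall>(ps, c)\<in>set rls. \<forall>v. valuation m v \<longrightarrow> (\<forall>p\<in>set ps. satisfies M v p) \<longrightarrow> satisfies M v c)"

definition lhd :: "nat list \<Rightarrow> nat \<Rightarrow> logic \<Rightarrow> logic \<Rightarrow> bool" where
  "lhd ar m M1 M2 \<longleftrightarrow> Taut ar m M1 \<subset> Taut ar m M2"

definition minimal_cover :: "nat list \<Rightarrow> nat \<Rightarrow> form list \<Rightarrow> (form list \<times> form) list \<Rightarrow> logic \<Rightarrow> bool" where
  "minimal_cover ar m axs rls M \<longleftrightarrow> is_logic ar m M \<and> is_cover ar m axs rls M \<and>
     \<not> (\<exists>M'. is_logic ar m M' \<and> is_cover ar m axs rls M' \<and> lhd ar m M' M)"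

definition same_logic :: "nat list \<Rightarrow> nat \<Rightarrow> logic \<Rightarrow> logic \<Rightarrow> bool" where
  "same_logic ar m M M' \<longleftrightarrow> fst M = fst M' \<and>
     (\<forall>c<length ar. \<forall>args. length args = ar ! c \<and> set args \<subseteq> {1..m} \<longrightarrow> snd M c args = snd M' c args)"

fun enc_form :: "form \<Rightarrow> nat" where
  "enc_form (Var n) = prod_encode (0, n)"
| "enc_form (App c fs) = prod_encode (1, prod_encode (c, list_encode (map enc_form fs)))"

definition enc_rule :: "form list \<times> form \<Rightarrow> nat" where
  "enc_rule r = prod_encode (list_encode (map enc_form (fst r)), enc_form (snd r))"

definition enc_input :: "nat list \<Rightarrow> form list \<Rightarrow> (form list \<times> form) list \<Rightarrow> nat \<Rightarrow> nat" where
  "enc_input ar axs rls m = list_encode [list_encode ar, list_encode (map enc_form axs),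
      list_encode (map enc_rule rls), m]"

text \<open>A finite description of a logic: list of designated values and a finite truth table
((connective, arguments), value).\<close>

type_synonym logic_code = "nat list \<times> ((nat \<times> nat list) \<times> nat) list"

definition logic_of_code :: "logic_code \<Rightarrow> logic" where
  "logic_of_code k = (set (fst k),
     (\<lambda>c args. case map_of (snd k) (c, args) of Some y \<Rightarrow> y | None \<Rightarrow> 1))"

definition enc_entry :: "(nat \<times> nat list) \<times> nat \<Rightarrow> nat" where
  "enc_entry e = prod_encode (prod_encode (fst (fst e), list_encode (snd (fst e))), snd e)"

definition enc_code :: "logic_code \<Rightarrow> nat" where
  "enc_code k = prod_encode (list_encode (fst k), list_encode (map enc_entry (snd k)))"

end

theory Submission
  imports Defs "HOL-Library.FuncSet"
begin

(*
  The algorithm enumerates all codes of finite truth tables up to an explicit bound and keeps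
  those describing covers that have no strictly smaller cover among the enumerated codes. Every
  m-valued logic agrees on {1..m} with the logic of a canonical table whose code lies below the
  bound, so up to same_logic no minimal cover is missed.

  Being a logic and being a cover are finite checks, since the axioms and rules mention only
  finitely many variables. Inclusion of tautology sets is decidable as well: a tautology of M1
  falsified in M2 can be renamed into one in the variables X_1, ..., X_m; and the pairs of truth
  tables (for M1 and for M2) on m variables realised by formulas of depth at most d stop growing
  as soon as two consecutive depths agree, which happens before depth K = (m^2)^(m^m). So it
  suffices to test the finitely many well-formed formulas in m variables of depth at most K.
  All these tests are obtained from primitive recursion, bounded search and course-of-values
  recursion on codes, hence are computed by a partial recursive function.
*)

section \<open>Closure properties of the partial recursive functions\<close>

definition computable :: "(nat \<Rightarrow> nat) \<Rightarrow> bool" where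
  "computable f \<longleftrightarrow> (\<exists>p. \<forall>x. rf_eval p [x] (f x))"

definition computable2 :: "(nat \<Rightarrow> nat \<Rightarrow> nat) \<Rightarrow> bool" where
  "computable2 f \<longleftrightarrow> (\<exists>p. \<forall>x y. rf_eval p [x, y] (f x y))"

lemma computable_id: "computable (\<lambda>x. x)"
  unfolding computable_def using rf_Id[of 0 "[_]"] by auto

lemma computable2_fst: "computable2 (\<lambda>x y. x)"
  unfolding computable2_def using rf_Id[of 0 "[_, _]"] by auto

lemma computable2_snd: "computable2 (\<lambda>x y. y)"
  unfolding computable2_def using rf_Id[of 1 "[_, _]"] by auto

lemma computable_Suc: "computable f \<Longrightarrow> computable (\<lambda>x. Suc (f x))"
proof -
  assume "computable f"
  then obtain p where p: "\<forall>x. rf_eval p [x] (f x)" unfolding computable_def by blast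
  have "rf_eval (Cn S [p]) [x] (Suc (f x))" for x
    by (rule rf_Cn[where ys = "[f x]"]) (auto simp: p rf_S)
  then show ?thesis unfolding computable_def by blast
qed

lemma computable_const: "computable (\<lambda>x. c)"
proof (induction c)
  case 0
  show ?case unfolding computable_def using rf_Z by blast
next
  case (Suc c)
  from computable_Suc[OF this] show ?case .
qed

lemma computable_compose2:
  "computable2 h \<Longrightarrow> computable f \<Longrightarrow> computable g \<Longrightarrow> computable (\<lambda>x. h (f x) (g x))"
proof -
  assume "computable2 h" "computable f" "computable g"
  then obtain ph pf pg where ph: "\<forall>x y. rf_eval ph [x, y] (h x y)"
    and pf: "\<forall>x. rf_eval pf [x] (f x)" and pg: "\<forall>x. rf_eval pg [x] (g x)"
    unfolding computable_def computable2_def by blast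
  have "rf_eval (Cn ph [pf, pg]) [x] (h (f x) (g x))" for x
    by (rule rf_Cn[where ys = "[f x, g x]"]) (auto simp: ph pf pg)
  then show ?thesis unfolding computable_def by blast
qed

lemma computable2_compose2:
  "computable2 h \<Longrightarrow> computable2 f \<Longrightarrow> computable2 g \<Longrightarrow> computable2 (\<lambda>x y. h (f x y) (g x y))"
proof -
  assume "computable2 h" "computable2 f" "computable2 g"
  then obtain ph pf pg where ph: "\<forall>x y. rf_eval ph [x, y] (h x y)"
    and pf: "\<forall>x y. rf_eval pf [x, y] (f x y)" and pg: "\<forall>x y. rf_eval pg [x, y] (g x y)"
    unfolding computable2_def by blast
  have "rf_eval (Cn ph [pf, pg]) [x, y] (h (f x y) (g x y))" for x y
    by (rule rf_Cn[where ys = "[f x y, g x y]"]) (auto simp: ph pf pg)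
  then show ?thesis unfolding computable2_def by blast
qed

lemma computable2_compose: "computable h \<Longrightarrow> computable2 f \<Longrightarrow> computable2 (\<lambda>x y. h (f x y))"
proof -
  assume "computable h" "computable2 f"
  then obtain ph pf where ph: "\<forall>x. rf_eval ph [x] (h x)"
    and pf: "\<forall>x y. rf_eval pf [x, y] (f x y)"
    unfolding computable_def computable2_def by blast
  have "rf_eval (Cn ph [pf]) [x, y] (h (f x y))" for x y
    by (rule rf_Cn[where ys = "[f x y]"]) (auto simp: ph pf)
  then show ?thesis unfolding computable2_def by blast
qed

lemma computable2_const: "computable2 (\<lambda>x y. c)"
  using computable2_compose[OF computable_const computable2_fst] .

lemma computable_from_computable2: "computable2 h \<Longrightarrow> computable (\<lambda>x. h x c)"
  using computable_compose2[OF _ computable_id computable_const] .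

text \<open>The recursion scheme realised by \<^const>\<open>Pr\<close>; the step function does not see the
  parameter \<open>x\<close>, which suffices until pairing is available.\<close>

lemma computable2_rec:
  assumes g: "computable g" and h: "computable2 h"
    and f0: "\<And>x. f 0 x = g x" and fSuc: "\<And>n x. f (Suc n) x = h (f n x) n"
  shows "computable2 f"
proof -
  obtain pg ph where pg: "\<forall>x. rf_eval pg [x] (g x)" and ph: "\<forall>x y. rf_eval ph [x, y] (h x y)"
    using g h unfolding computable_def computable2_def by blast
  have step: "rf_eval (Cn ph [Id 0, Id 1]) [r, n, x] (h r n)" for r n x
    by (rule rf_Cn[where ys = "[r, n]"]) (auto simp: ph intro: rf_Id[of 0 "[_, _, _]", simplified]
        rf_Id[of 1 "[_, _, _]", simplified])
  have "rf_eval (Pr pg (Cn ph [Id 0, Id 1])) [n, x] (f n x)" for n x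
  proof (induction n)
    case 0
    show ?case by (simp add: f0 rf_Pr0 pg)
  next
    case (Suc n)
    show ?case using rf_PrS[OF Suc step] by (simp add: fSuc)
  qed
  then show ?thesis unfolding computable2_def by blast
qed

lemma computable2_add: "computable2 (+)"
proof (rule computable2_rec[where g = "\<lambda>x. x" and h = "\<lambda>r k. Suc r"])
  show "computable2 (\<lambda>r k. Suc r)"
    by (rule computable2_compose[OF computable_Suc[OF computable_id] computable2_fst])
qed (simp_all add: computable_id)

lemma computable_pred: "computable (\<lambda>n. n - 1)"
proof -
  have "computable2 (\<lambda>n x. n - 1)"
    by (rule computable2_rec[where g = "\<lambda>x. 0" and h = "\<lambda>r k. k"])
      (auto intro: computable_const computable2_snd)
  from computable_from_computable2[OF this] show ?thesis .
qed

lemma computable2_diff_swap: "computable2 (\<lambda>n x. x - n)"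
proof (rule computable2_rec[where g = "\<lambda>x. x" and h = "\<lambda>r k. r - 1"])
  show "computable2 (\<lambda>r k. r - 1)"
    by (rule computable2_compose[OF computable_pred computable2_fst])
qed (simp_all add: computable_id)

lemma computable_triangle: "computable triangle"
proof -
  have "computable2 (\<lambda>n x. triangle n)"
  proof (rule computable2_rec[where g = "\<lambda>x. 0" and h = "\<lambda>r k. r + Suc k"])
    show "computable2 (\<lambda>r k. r + Suc k)"
      by (rule computable2_compose2[OF computable2_add computable2_fst
            computable2_compose[OF computable_Suc[OF computable_id] computable2_snd]])
  qed (simp_all add: computable_const)
  from computable_from_computable2[OF this] show ?thesis .
qed

primrec triangle_root :: "nat \<Rightarrow> nat" where
  "triangle_root 0 = 0"
| "triangle_root (Suc n) =
     (if triangle (Suc (triangle_root n)) \<le> Suc n then Suc (triangle_root n) else triangle_root n)"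

lemma triangle_root_bounds: "triangle (triangle_root n) \<le> n \<and> n < triangle (Suc (triangle_root n))"
  by (induction n) auto

lemma computable_triangle_root: "computable triangle_root"
proof -
  \<comment> \<open>\<open>1 - (a - b)\<close> is \<open>1\<close> if \<open>a \<le> b\<close> and \<open>0\<close> otherwise\<close>
  have le: "computable2 (\<lambda>a b. 1 - (a - b))"
    by (rule computable2_compose2[OF computable2_diff_swap
          computable2_compose2[OF computable2_diff_swap computable2_snd computable2_fst] computable2_const])
  have "computable2 (\<lambda>n x. triangle_root n)"
  proof (rule computable2_rec[where g = "\<lambda>x. 0" and h = "\<lambda>r k. r + (1 - (triangle (Suc r) - Suc k))"])
    show "computable2 (\<lambda>r k. r + (1 - (triangle (Suc r) - Suc k)))"
      by (intro computable2_compose2[OF computable2_add computable2_fst] computable2_compose2[OF le]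
          computable2_compose[OF computable_triangle] computable2_compose[OF computable_Suc[OF computable_id]]
          computable2_fst computable2_snd)
  qed (auto simp: computable_const)
  from computable_from_computable2[OF this] show ?thesis .
qed

definition pair :: "nat \<Rightarrow> nat \<Rightarrow> nat" where
  "pair a b = prod_encode (a, b)"

definition unpair1 :: "nat \<Rightarrow> nat" where
  "unpair1 n = fst (prod_decode n)"

definition unpair2 :: "nat \<Rightarrow> nat" where
  "unpair2 n = snd (prod_decode n)"

lemma unpair1_pair [simp]: "unpair1 (pair a b) = a"
  by (simp add: pair_def unpair1_def)

lemma unpair2_pair [simp]: "unpair2 (pair a b) = b"
  by (simp add: pair_def unpair2_def)

lemma pair_unpair [simp]: "pair (unpair1 n) (unpair2 n) = n"
  by (simp add: pair_def unpair1_def unpair2_def)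

lemma pair_eq_iff [simp]: "pair a b = pair c d \<longleftrightarrow> a = c \<and> b = d"
  by (simp add: pair_def)

lemma pair_0_0: "pair 0 0 = 0"
  by (simp add: pair_def prod_encode_def)

lemma unpair_0 [simp]: "unpair1 0 = 0" "unpair2 0 = 0"
  by (metis pair_0_0 unpair1_pair unpair2_pair)+

lemma le_pair1: "a \<le> pair a b"
  unfolding pair_def by (rule le_prod_encode_1)

lemma le_pair2: "b \<le> pair a b"
  unfolding pair_def by (rule le_prod_encode_2)

lemma less_pair_1: "b < pair 1 b"
proof -
  have "b \<le> triangle (1 + b)" by (induction b) auto
  then show ?thesis by (simp add: pair_def prod_encode_def)
qed

lemma triangle_mono: "a \<le> b \<Longrightarrow> triangle a \<le> triangle b"
  by (induction b) (auto simp: le_Suc_eq)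

lemma pair_mono: "a \<le> a' \<Longrightarrow> b \<le> b' \<Longrightarrow> pair a b \<le> pair a' b'"
  unfolding pair_def prod_encode_def using triangle_mono[of "a + b" "a' + b'"] by simp

lemma prod_decode_triangle_root:
  "prod_decode n = (n - triangle (triangle_root n), triangle_root n - (n - triangle (triangle_root n)))"
proof -
  let ?s = "triangle_root n"
  have "triangle ?s \<le> n" "n < triangle ?s + Suc ?s" using triangle_root_bounds[of n] by auto
  then have "prod_encode (n - triangle ?s, ?s - (n - triangle ?s)) = n"
    by (simp add: prod_encode_def)
  then show ?thesis by (metis prod_encode_inverse)
qed

lemma computable2_pair: "computable2 pair"
proof -
  have "computable2 (\<lambda>a b. triangle (a + b) + a)"
    by (rule computable2_compose2[OF computable2_add
          computable2_compose[OF computable_triangle computable2_add] computable2_fst])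
  then show ?thesis by (simp add: pair_def[abs_def] prod_encode_def)
qed

lemma computable_diff: "computable f \<Longrightarrow> computable g \<Longrightarrow> computable (\<lambda>x. f x - g x)"
  by (rule computable_compose2[OF computable2_diff_swap])

lemma computable_add: "computable f \<Longrightarrow> computable g \<Longrightarrow> computable (\<lambda>x. f x + g x)"
  by (rule computable_compose2[OF computable2_add])

lemma computable_pair: "computable f \<Longrightarrow> computable g \<Longrightarrow> computable (\<lambda>x. pair (f x) (g x))"
  by (rule computable_compose2[OF computable2_pair])

lemma computable_comp: "computable g \<Longrightarrow> computable f \<Longrightarrow> computable (\<lambda>x. g (f x))"
  using computable_compose2[OF computable2_compose[OF _ computable2_fst] _ computable_id] .

lemma computable_unpair1: "computable f \<Longrightarrow> computable (\<lambda>x. unpair1 (f x))"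
proof -
  assume f: "computable f"
  have "computable (\<lambda>n. n - triangle (triangle_root n))"
    by (intro computable_diff computable_id computable_comp[OF computable_triangle]
        computable_triangle_root)
  from computable_comp[OF this f] show ?thesis
    by (simp add: unpair1_def prod_decode_triangle_root)
qed

lemma computable_unpair2: "computable f \<Longrightarrow> computable (\<lambda>x. unpair2 (f x))"
proof -
  assume f: "computable f"
  have "computable (\<lambda>n. triangle_root n - (n - triangle (triangle_root n)))"
    by (intro computable_diff computable_id computable_comp[OF computable_triangle]
        computable_triangle_root)
  from computable_comp[OF this f] show ?thesis
    by (simp add: unpair2_def prod_decode_triangle_root)
qed

lemma computable_compose_uncurried:
  assumes "computable (\<lambda>y. h (unpair1 y) (unpair2 y))" "computable f" "computable g"
  shows "computable (\<lambda>x. h (f x) (g x))"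
  using computable_comp[OF assms(1) computable_pair[OF assms(2,3)]] by simp

lemma computable_compose_uncurried3:
  assumes "computable (\<lambda>y. h (unpair1 y) (unpair1 (unpair2 y)) (unpair2 (unpair2 y)))"
    and "computable f" "computable g" "computable k"
  shows "computable (\<lambda>x. h (f x) (g x) (k x))"
  using computable_comp[OF assms(1) computable_pair[OF assms(2) computable_pair[OF assms(3,4)]]]
  by simp

lemma computable2_funpow: "computable f \<Longrightarrow> computable2 (\<lambda>n a. (f ^^ n) a)"
  by (rule computable2_rec[OF computable_id computable2_compose[OF _ computable2_fst]]) simp_all

text \<open>Most functions below are computed by iterating a computable step on a state that is
  a nested pair, and projecting the result out of the final state.\<close>

lemma computable_funpow:
  "computable f \<Longrightarrow> computable N \<Longrightarrow> computable A \<Longrightarrow> computable (\<lambda>x. (f ^^ N x) (A x))"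
  by (rule computable_compose2[OF computable2_funpow])

lemma computable_mult: "computable f \<Longrightarrow> computable g \<Longrightarrow> computable (\<lambda>x. f x * g x)"
proof -
  assume f: "computable f" and g: "computable g"
  let ?step = "\<lambda>s. pair (unpair1 s) (unpair2 s + unpair1 s)"
  have iter: "(?step ^^ n) (pair a 0) = pair a (n * a)" for n a
    by (induction n) auto
  have "computable (\<lambda>x. unpair2 ((?step ^^ f x) (pair (g x) 0)))"
    by (intro computable_unpair2 computable_funpow f computable_pair computable_add
        computable_unpair1 computable_id g computable_const)
  then show ?thesis by (simp add: iter mult.commute)
qed

lemma computable_power: "computable f \<Longrightarrow> computable g \<Longrightarrow> computable (\<lambda>x. f x ^ g x)"
proof -
  assume f: "computable f" and g: "computable g"
  let ?step = "\<lambda>s. pair (unpair1 s) (unpair2 s * unpair1 s)"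
  have iter: "(?step ^^ n) (pair a (Suc 0)) = pair a (a ^ n)" for n a
    by (induction n) auto
  have "computable (\<lambda>x. unpair2 ((?step ^^ g x) (pair (f x) (Suc 0))))"
    by (intro computable_unpair2 computable_funpow g computable_pair computable_mult
        computable_unpair1 computable_id f computable_const)
  then show ?thesis by (simp add: iter)
qed

lemma computable_cong: "computable g \<Longrightarrow> (\<And>x. g x = f x) \<Longrightarrow> computable f"
  by (metis ext)

definition decidable :: "(nat \<Rightarrow> bool) \<Rightarrow> bool" where
  "decidable P \<longleftrightarrow> computable (\<lambda>x. of_bool (P x))"

lemma computable_of_bool: "decidable P \<Longrightarrow> computable (\<lambda>x. of_bool (P x))"
  by (simp add: decidable_def)

lemma decidable_cong: "decidable P \<Longrightarrow> (\<And>x. P x \<longleftrightarrow> Q x) \<Longrightarrow> decidable Q"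
  unfolding decidable_def by (erule computable_cong) simp

lemma decidable_eq: "computable f \<Longrightarrow> computable g \<Longrightarrow> decidable (\<lambda>x. f x = g x)"
proof -
  assume "computable f" "computable g"
  then have "computable (\<lambda>x. 1 - ((f x - g x) + (g x - f x)))"
    by (intro computable_diff computable_add computable_const)
  then show ?thesis unfolding decidable_def by (rule computable_cong) auto
qed

lemma decidable_le: "computable f \<Longrightarrow> computable g \<Longrightarrow> decidable (\<lambda>x. f x \<le> g x)"
proof -
  assume "computable f" "computable g"
  then have "computable (\<lambda>x. 1 - (f x - g x))" by (intro computable_diff computable_const)
  then show ?thesis unfolding decidable_def by (rule computable_cong) auto
qed

lemma decidable_less: "computable f \<Longrightarrow> computable g \<Longrightarrow> decidable (\<lambda>x. f x < g x)"
proof -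
  assume "computable f" "computable g"
  then have "computable (\<lambda>x. 1 - (Suc (f x) - g x))"
    by (intro computable_diff computable_Suc computable_const)
  then show ?thesis unfolding decidable_def by (rule computable_cong) auto
qed

lemma decidable_not: "decidable P \<Longrightarrow> decidable (\<lambda>x. \<not> P x)"
proof -
  assume "decidable P"
  then have "computable (\<lambda>x. 1 - of_bool (P x))"
    unfolding decidable_def by (intro computable_diff computable_const)
  then show ?thesis unfolding decidable_def by (rule computable_cong) auto
qed

lemma decidable_conj: "decidable P \<Longrightarrow> decidable Q \<Longrightarrow> decidable (\<lambda>x. P x \<and> Q x)"
proof -
  assume "decidable P" "decidable Q"
  then have "computable (\<lambda>x. of_bool (P x) + of_bool (Q x) - 1)"
    unfolding decidable_def by (intro computable_diff computable_add computable_const)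
  then show ?thesis unfolding decidable_def by (rule computable_cong) auto
qed

lemma decidable_disj: "decidable P \<Longrightarrow> decidable Q \<Longrightarrow> decidable (\<lambda>x. P x \<or> Q x)"
  by (rule decidable_cong[OF decidable_not[OF decidable_conj[OF decidable_not decidable_not]]]) auto

lemma decidable_imp: "decidable P \<Longrightarrow> decidable Q \<Longrightarrow> decidable (\<lambda>x. P x \<longrightarrow> Q x)"
  by (rule decidable_cong[OF decidable_disj[OF decidable_not]]) auto

lemma computable_If:
  "decidable P \<Longrightarrow> computable f \<Longrightarrow> computable g \<Longrightarrow> computable (\<lambda>x. if P x then f x else g x)"
proof -
  assume "decidable P" "computable f" "computable g"
  then have "computable (\<lambda>x. of_bool (P x) * f x + (1 - of_bool (P x)) * g x)"
    unfolding decidable_def by (intro computable_add computable_mult computable_diff computable_const)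
  then show ?thesis by (rule computable_cong) auto
qed

lemma computable_sum_lessThan:
  assumes f: "computable (\<lambda>y. f (unpair1 y) (unpair2 y))" and N: "computable N"
  shows "computable (\<lambda>x. \<Sum>i<N x. f i x)"
proof -
  let ?step = "\<lambda>s. pair (unpair1 s) (pair (Suc (unpair1 (unpair2 s)))
                  (unpair2 (unpair2 s) + f (unpair1 (unpair2 s)) (unpair1 s)))"
  have iter: "(?step ^^ n) (pair x (pair 0 0)) = pair x (pair n (\<Sum>i<n. f i x))" for n x
    by (induction n) auto
  have step: "computable ?step"
    by (intro computable_pair computable_unpair1 computable_id computable_Suc computable_add
        computable_unpair2 computable_compose_uncurried[OF f]
        computable_unpair1[OF computable_unpair2[OF computable_id]])
  have "computable (\<lambda>x. unpair2 (unpair2 ((?step ^^ N x) (pair x (pair 0 0)))))"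
    by (intro computable_unpair2 computable_funpow[OF step N] computable_pair computable_id
        computable_const)
  then show ?thesis by (simp add: iter)
qed

lemma decidable_all_less:
  assumes P: "decidable (\<lambda>y. P (unpair1 y) (unpair2 y))" and N: "computable N"
  shows "decidable (\<lambda>x. \<forall>i<N x. P i x)"
proof -
  have "computable (\<lambda>y. of_bool (\<not> P (unpair1 y) (unpair2 y)))"
    using decidable_not[OF P] unfolding decidable_def .
  then have "decidable (\<lambda>x. (\<Sum>i<N x. of_bool (\<not> P i x) :: nat) = 0)"
    by (intro decidable_eq computable_sum_lessThan N computable_const)
  then show ?thesis by (rule decidable_cong) auto
qed

lemma decidable_ex_less:
  "decidable (\<lambda>y. P (unpair1 y) (unpair2 y)) \<Longrightarrow> computable N \<Longrightarrow> decidable (\<lambda>x. \<exists>i<N x. P i x)"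
  by (rule decidable_cong[OF decidable_not[OF decidable_all_less[OF decidable_not]]]) auto

lemma decidable_compose_uncurried:
  "decidable (\<lambda>y. P (unpair1 y) (unpair2 y)) \<Longrightarrow> computable f \<Longrightarrow> computable g \<Longrightarrow>
    decidable (\<lambda>x. P (f x) (g x))"
  unfolding decidable_def by (rule computable_compose_uncurried)

lemma decidable_compose_uncurried3:
  "decidable (\<lambda>y. P (unpair1 y) (unpair1 (unpair2 y)) (unpair2 (unpair2 y))) \<Longrightarrow>
    computable f \<Longrightarrow> computable g \<Longrightarrow> computable k \<Longrightarrow> decidable (\<lambda>x. P (f x) (g x) (k x))"
  unfolding decidable_def by (rule computable_compose_uncurried3)

lemma decidable_compose_uncurried4:
  assumes "decidable (\<lambda>y. P (unpair1 y) (unpair1 (unpair2 y)) (unpair1 (unpair2 (unpair2 y)))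
             (unpair2 (unpair2 (unpair2 y))))"
    and "computable f" "computable g" "computable k" "computable l"
  shows "decidable (\<lambda>x. P (f x) (g x) (k x) (l x))"
  using computable_comp[OF assms(1)[unfolded decidable_def]
      computable_pair[OF assms(2) computable_pair[OF assms(3) computable_pair[OF assms(4,5)]]]]
  unfolding decidable_def by simp

section \<open>Codes of lists\<close>

text \<open>\<^const>\<open>list_encode\<close> maps \<open>x # xs\<close> to \<open>Suc (prod_encode (x, list_encode xs))\<close>.\<close>

definition code_cons :: "nat \<Rightarrow> nat \<Rightarrow> nat" where
  "code_cons a l = Suc (pair a l)"

definition code_hd :: "nat \<Rightarrow> nat" where
  "code_hd n = unpair1 (n - 1)"

definition code_tl :: "nat \<Rightarrow> nat" where
  "code_tl n = unpair2 (n - 1)"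

definition code_drop :: "nat \<Rightarrow> nat \<Rightarrow> nat" where
  "code_drop i n = (code_tl ^^ i) n"

definition code_nth :: "nat \<Rightarrow> nat \<Rightarrow> nat" where
  "code_nth n i = code_hd (code_drop i n)"

text \<open>A list is never longer than its code, so counting nonempty suffixes below \<open>n\<close> suffices.\<close>

definition code_length :: "nat \<Rightarrow> nat" where
  "code_length n = (\<Sum>i<n. of_bool (code_drop i n \<noteq> 0))"

lemma code_cons_list_encode: "code_cons a (list_encode xs) = list_encode (a # xs)"
  by (simp add: code_cons_def pair_def)

lemma code_tl_list_encode [simp]: "code_tl (list_encode xs) = list_encode (tl xs)"
  by (cases xs) (simp add: code_tl_def, simp add: code_tl_def unpair2_def)

lemma code_hd_list_encode [simp]: "code_hd (list_encode (x # xs)) = x"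
  by (simp add: code_hd_def unpair1_def)

lemma code_drop_list_encode [simp]: "code_drop i (list_encode xs) = list_encode (drop i xs)"
  unfolding code_drop_def by (induction i arbitrary: xs) (auto simp: drop_Suc tl_drop funpow_swap1)

lemma code_nth_list_encode [simp]: "i < length xs \<Longrightarrow> code_nth (list_encode xs) i = xs ! i"
  unfolding code_nth_def by (simp add: Cons_nth_drop_Suc[symmetric] del: list_encode.simps)

lemma length_le_list_encode: "length xs \<le> list_encode xs"
  by (induction xs) (auto intro: le_trans[OF _ le_prod_encode_2])

lemma code_length_list_encode [simp]: "code_length (list_encode xs) = length xs"
proof -
  have "code_length (list_encode xs) = (\<Sum>i<list_encode xs. of_bool (i < length xs))"
    unfolding code_length_def by (intro sum.cong) (auto simp: list_encode_eq[where y = "[]", simplified])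
  also have "\<dots> = card {i. i < list_encode xs \<and> i < length xs}"
    by (simp add: of_bool_def sum.If_cases Int_def)
  also have "{i. i < list_encode xs \<and> i < length xs} = {..<length xs}"
    using length_le_list_encode[of xs] by auto
  finally show ?thesis by simp
qed

lemma less_list_encode: "x \<in> set xs \<Longrightarrow> x < list_encode xs"
proof (induction xs)
  case (Cons a xs)
  then show ?case
    using le_prod_encode_1[of a "list_encode xs"] le_prod_encode_2[of "list_encode xs" a] by auto
qed simp

lemma computable_code_cons: "computable f \<Longrightarrow> computable g \<Longrightarrow> computable (\<lambda>x. code_cons (f x) (g x))"
  unfolding code_cons_def by (intro computable_Suc computable_pair)

lemma computable_code_tl: "computable f \<Longrightarrow> computable (\<lambda>x. code_tl (f x))"
  unfolding code_tl_def by (intro computable_unpair2 computable_diff computable_const)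

lemma computable_code_hd: "computable f \<Longrightarrow> computable (\<lambda>x. code_hd (f x))"
  unfolding code_hd_def by (intro computable_unpair1 computable_diff computable_const)

lemma computable_code_drop: "computable f \<Longrightarrow> computable g \<Longrightarrow> computable (\<lambda>x. code_drop (f x) (g x))"
  unfolding code_drop_def by (intro computable_funpow computable_code_tl computable_id)

lemma computable_code_nth: "computable f \<Longrightarrow> computable g \<Longrightarrow> computable (\<lambda>x. code_nth (f x) (g x))"
  unfolding code_nth_def by (intro computable_code_hd computable_code_drop)

lemma computable_code_length: "computable f \<Longrightarrow> computable (\<lambda>x. code_length (f x))"
proof -
  assume f: "computable f"
  have "decidable (\<lambda>y. code_drop (unpair1 y) (unpair2 y) \<noteq> 0)"
    by (intro decidable_not decidable_eq computable_code_drop computable_unpair1 computable_unpair2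
        computable_id computable_const)
  then have "computable code_length"
    unfolding code_length_def[abs_def] decidable_def
    by (rule computable_sum_lessThan[OF _ computable_id])
  from computable_comp[OF this f] show ?thesis .
qed

definition bounded_least :: "nat \<Rightarrow> (nat \<Rightarrow> bool) \<Rightarrow> nat" where
  "bounded_least N P = (\<Sum>i<N. of_bool (\<forall>j\<le>i. \<not> P j))"

lemma bounded_least_eq: "bounded_least N P = (if \<exists>i<N. P i then LEAST i. P i else N)"
proof -
  let ?L = "if \<exists>i<N. P i then LEAST i. P i else N"
  have "{i. i < N \<and> (\<forall>j\<le>i. \<not> P j)} = {..<?L}"
  proof (cases "\<exists>i<N. P i")
    case True
    then obtain i0 where "i0 < N" "P i0" by blast
    then have "(LEAST i. P i) < N" "P (LEAST i. P i)"
      using Least_le[of P i0] LeastI[of P i0] by auto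
    show ?thesis
    proof (intro set_eqI iffI)
      fix i assume "i \<in> {i. i < N \<and> (\<forall>j\<le>i. \<not> P j)}"
      then have "\<not> (LEAST i. P i) \<le> i" using \<open>P (LEAST i. P i)\<close> by auto
      then show "i \<in> {..<?L}" using True by simp
    next
      fix i assume "i \<in> {..<?L}"
      then have "i < (LEAST i. P i)" using True by simp
      then show "i \<in> {i. i < N \<and> (\<forall>j\<le>i. \<not> P j)}"
        using \<open>(LEAST i. P i) < N\<close> not_less_Least[of _ P] by fastforce
    qed
  qed auto
  then show ?thesis
    unfolding bounded_least_def by (simp add: of_bool_def sum.If_cases Int_def)
qed

lemma computable_bounded_least:
  assumes P: "decidable (\<lambda>y. P (unpair1 y) (unpair2 y))" and N: "computable N"
  shows "computable (\<lambda>x. bounded_least (N x) (\<lambda>i. P i x))"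
proof -
  have "decidable (\<lambda>y. \<forall>j<Suc (unpair1 y). \<not> P j (unpair2 y))"
    by (intro decidable_all_less decidable_not computable_Suc computable_unpair1 computable_id
        decidable_compose_uncurried[OF P] computable_unpair2)
  then show ?thesis
    unfolding bounded_least_def decidable_def less_Suc_eq_le[symmetric]
    by (rule computable_sum_lessThan[OF _ N])
qed

text \<open>The value \<open>1\<close> for a missing key mirrors the default of \<^const>\<open>logic_of_code\<close>.\<close>

definition code_lookup :: "nat \<Rightarrow> nat \<Rightarrow> nat" where
  "code_lookup T key =
     (let i = bounded_least (code_length T) (\<lambda>i. unpair1 (code_nth T i) = key)
      in if i < code_length T then unpair2 (code_nth T i) else 1)"

lemma computable_code_lookup:
  assumes f: "computable f" and g: "computable g"
  shows "computable (\<lambda>x. code_lookup (f x) (g x))"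
proof -
  have index: "computable (\<lambda>y. bounded_least (code_length (unpair1 y))
                  (\<lambda>i. unpair1 (code_nth (unpair1 y) i) = unpair2 y))"
    by (intro computable_bounded_least decidable_eq computable_unpair1 computable_unpair2
        computable_code_nth computable_code_length computable_id)
  have "computable (\<lambda>y. code_lookup (unpair1 y) (unpair2 y))"
    unfolding code_lookup_def Let_def
    by (intro computable_If decidable_less computable_unpair2 computable_code_nth index
        computable_code_length computable_unpair1 computable_id computable_const)
  from computable_compose_uncurried[OF this f g] show ?thesis .
qed

lemma map_of_eq_find: "map_of xs k = map_option snd (find (\<lambda>p. fst p = k) xs)"
  by (induction xs) auto

lemma code_lookup_list_encode:
  assumes key: "\<And>e. e \<in> set es \<Longrightarrow> unpair1 (enc e) = key \<longleftrightarrow> fst e = k"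
    and val: "\<And>e. e \<in> set es \<Longrightarrow> unpair2 (enc e) = snd e"
  shows "code_lookup (list_encode (map enc es)) key = (case map_of es k of Some v \<Rightarrow> v | None \<Rightarrow> 1)"
proof -
  have index: "bounded_least (length es) (\<lambda>i. unpair1 (code_nth (list_encode (map enc es)) i) = key)
      = bounded_least (length es) (\<lambda>i. i < length es \<and> fst (es ! i) = k)"
    unfolding bounded_least_def by (intro sum.cong refl) (auto simp: key)
  show ?thesis
  proof (cases "find (\<lambda>e. fst e = k) es")
    case None
    then have "\<forall>i<length es. fst (es ! i) \<noteq> k"
      unfolding find_None_iff by (metis nth_mem)
    then have "bounded_least (length es) (\<lambda>i. i < length es \<and> fst (es ! i) = k) = length es"
      by (auto simp: bounded_least_eq)
    then show ?thesis
      using None by (simp add: code_lookup_def index map_of_eq_find)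
  next
    case (Some e)
    then obtain i where i: "i < length es" "fst (es ! i) = k" "e = es ! i"
        "\<forall>j<i. fst (es ! j) \<noteq> k"
      by (auto simp: find_Some_iff)
    then have "(LEAST i. i < length es \<and> fst (es ! i) = k) = i"
      by (intro Least_equality) (auto simp: not_less[symmetric])
    then have "bounded_least (length es) (\<lambda>i. i < length es \<and> fst (es ! i) = k) = i"
      using i by (auto simp: bounded_least_eq)
    then show ?thesis
      using Some i by (simp add: code_lookup_def index map_of_eq_find val)
  qed
qed

lemma computable_list_encode_replicate:
  assumes f: "computable f" and g: "computable g"
  shows "computable (\<lambda>x. list_encode (replicate (f x) (g x)))"
proof -
  let ?step = "\<lambda>s. pair (unpair1 s) (code_cons (unpair1 s) (unpair2 s))"
  have iter: "(?step ^^ n) (pair e 0) = pair e (list_encode (replicate n e))" for n e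
    by (induction n) (auto simp: code_cons_list_encode[of _ "replicate _ _", simplified])
  have "computable (\<lambda>x. unpair2 ((?step ^^ f x) (pair (g x) 0)))"
    by (intro computable_unpair2 computable_funpow f computable_pair computable_code_cons
        computable_unpair1 computable_id g computable_const)
  then show ?thesis by (simp add: iter)
qed

lemma list_encode_le_replicate:
  "length xs \<le> n \<Longrightarrow> \<forall>x\<in>set xs. x \<le> e \<Longrightarrow> list_encode xs \<le> list_encode (replicate n e)"
proof (induction xs arbitrary: n)
  case (Cons x xs)
  then obtain n' where n: "n = Suc n'" "length xs \<le> n'" by (cases n) auto
  with Cons have "pair x (list_encode xs) \<le> pair e (list_encode (replicate n' e))"
    by (intro pair_mono) auto
  then show ?case by (simp add: n pair_def)
qed simp

definition rev_map_step :: "(nat \<Rightarrow> nat \<Rightarrow> nat) \<Rightarrow> nat \<Rightarrow> nat" where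
  "rev_map_step g s =
     (if unpair1 (unpair2 s) = 0 then s
      else pair (unpair1 s) (pair (code_tl (unpair1 (unpair2 s)))
             (code_cons (g (unpair1 s) (code_hd (unpair1 (unpair2 s)))) (unpair2 (unpair2 s)))))"

definition code_rev_map :: "(nat \<Rightarrow> nat \<Rightarrow> nat) \<Rightarrow> nat \<Rightarrow> nat \<Rightarrow> nat" where
  "code_rev_map g p l = unpair2 (unpair2 ((rev_map_step g ^^ l) (pair p (pair l 0))))"

definition code_map :: "(nat \<Rightarrow> nat \<Rightarrow> nat) \<Rightarrow> nat \<Rightarrow> nat \<Rightarrow> nat" where
  "code_map g p l = code_rev_map (\<lambda>_ y. y) 0 (code_rev_map g p l)"

lemma rev_map_step_funpow:
  "length ys \<le> k \<Longrightarrow> (rev_map_step g ^^ k) (pair p (pair (list_encode ys) (list_encode acc)))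
     = pair p (pair 0 (list_encode (rev (map (g p) ys) @ acc)))"
proof (induction ys arbitrary: k acc)
  case Nil
  have "(rev_map_step g ^^ k) (pair p (pair 0 (list_encode acc))) = pair p (pair 0 (list_encode acc))"
    for k
    by (induction k) (auto simp: rev_map_step_def)
  then show ?case by simp
next
  case (Cons y ys)
  then obtain k' where k: "k = Suc k'" "length ys \<le> k'" by (cases k) auto
  have "(rev_map_step g ^^ k) (pair p (pair (list_encode (y # ys)) (list_encode acc)))
      = (rev_map_step g ^^ k') (rev_map_step g (pair p (pair (list_encode (y # ys)) (list_encode acc))))"
    by (simp add: k funpow_Suc_right del: funpow.simps)
  also have "rev_map_step g (pair p (pair (list_encode (y # ys)) (list_encode acc)))
      = pair p (pair (list_encode ys) (list_encode (g p y # acc)))"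
    by (simp add: rev_map_step_def code_cons_list_encode del: list_encode.simps)
      (simp add: code_hd_def unpair1_def)
  also have "(rev_map_step g ^^ k') \<dots> = pair p (pair 0 (list_encode (rev (map (g p) ys) @ g p y # acc)))"
    by (rule Cons.IH[OF k(2)])
  finally show ?case by simp
qed

lemma code_map_list_encode: "code_map g p (list_encode xs) = list_encode (map (g p) xs)"
proof -
  have "code_rev_map g p (list_encode xs) = list_encode (rev (map (g p) xs))" for g p and xs :: "nat list"
    unfolding code_rev_map_def
    using rev_map_step_funpow[of xs "list_encode xs" g p "[]"] length_le_list_encode[of xs] by simp
  then show ?thesis unfolding code_map_def by simp
qed

lemma computable_code_map:
  assumes g: "computable (\<lambda>y. g (unpair1 y) (unpair2 y))" and f: "computable f" and h: "computable h"
  shows "computable (\<lambda>x. code_map g (f x) (h x))"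
proof -
  have step: "computable (rev_map_step g)" if g: "computable (\<lambda>y. g (unpair1 y) (unpair2 y))" for g
    unfolding rev_map_step_def[abs_def]
    by (intro computable_If decidable_eq computable_unpair1 computable_unpair2 computable_id
        computable_const computable_pair computable_code_tl computable_code_cons
        computable_compose_uncurried[OF g] computable_code_hd)
  have rev_map: "computable (\<lambda>x. code_rev_map g (f x) (h x))"
    if "computable (\<lambda>y. g (unpair1 y) (unpair2 y))" "computable f" "computable h" for g f h
    unfolding code_rev_map_def
    by (intro computable_unpair2 computable_funpow[OF step] computable_pair computable_const that)
  show ?thesis
    unfolding code_map_def
    by (intro rev_map computable_unpair2 computable_id computable_const g f h)
qed

definition rev_filter_step :: "(nat \<Rightarrow> nat \<Rightarrow> bool) \<Rightarrow> nat \<Rightarrow> nat" where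
  "rev_filter_step P s = pair (unpair1 s) (pair (Suc (unpair1 (unpair2 s)))
     (if P (unpair1 (unpair2 s)) (unpair1 s) then code_cons (unpair1 (unpair2 s)) (unpair2 (unpair2 s))
      else unpair2 (unpair2 s)))"

definition code_rev_filter_upt :: "(nat \<Rightarrow> nat \<Rightarrow> bool) \<Rightarrow> nat \<Rightarrow> nat \<Rightarrow> nat" where
  "code_rev_filter_upt P x N = unpair2 (unpair2 ((rev_filter_step P ^^ N) (pair x (pair 0 0))))"

lemma code_rev_filter_upt_eq:
  "code_rev_filter_upt P x N = list_encode (rev (filter (\<lambda>i. P i x) [0..<N]))"
proof -
  have "(rev_filter_step P ^^ n) (pair x (pair 0 0)) =
      pair x (pair n (list_encode (rev (filter (\<lambda>i. P i x) [0..<n]))))" for n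
    by (induction n) (auto simp: rev_filter_step_def code_cons_list_encode pair_0_0)
  then show ?thesis unfolding code_rev_filter_upt_def by simp
qed

lemma computable_code_rev_filter_upt:
  assumes P: "decidable (\<lambda>y. P (unpair1 y) (unpair2 y))" and N: "computable N"
  shows "computable (\<lambda>x. code_rev_filter_upt P x (N x))"
proof -
  have step: "computable (rev_filter_step P)"
    unfolding rev_filter_step_def[abs_def]
    by (intro computable_pair computable_unpair1 computable_id computable_Suc computable_unpair2
        computable_If decidable_compose_uncurried[OF P] computable_code_cons)
  show ?thesis unfolding code_rev_filter_upt_def
    by (intro computable_unpair2 computable_funpow[OF step N] computable_pair computable_id
        computable_const)
qed

text \<open>In \<open>cov_rec h x j\<close>, the step \<open>h x j\<close> receives the code of the list of all earlier
  values, most recent first.\<close>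

fun cov_history :: "(nat \<Rightarrow> nat \<Rightarrow> nat \<Rightarrow> nat) \<Rightarrow> nat \<Rightarrow> nat \<Rightarrow> nat" where
  "cov_history h x 0 = 0"
| "cov_history h x (Suc j) = code_cons (h x j (cov_history h x j)) (cov_history h x j)"

definition cov_rec :: "(nat \<Rightarrow> nat \<Rightarrow> nat \<Rightarrow> nat) \<Rightarrow> nat \<Rightarrow> nat \<Rightarrow> nat" where
  "cov_rec h x j = h x j (cov_history h x j)"

lemma cov_history_eq: "cov_history h x j = list_encode (rev (map (cov_rec h x) [0..<j]))"
  by (induction j) (auto simp: cov_rec_def code_cons_list_encode)

lemma code_nth_cov_history: "i < j \<Longrightarrow> code_nth (cov_history h x j) (j - 1 - i) = cov_rec h x i"
  unfolding cov_history_eq by (simp add: rev_nth)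

lemma computable_cov_rec:
  assumes h: "computable (\<lambda>y. h (unpair1 y) (unpair1 (unpair2 y)) (unpair2 (unpair2 y)))"
    and f: "computable f" and g: "computable g"
  shows "computable (\<lambda>x. cov_rec h (f x) (g x))"
proof -
  let ?step = "\<lambda>s. pair (unpair1 s) (pair (Suc (unpair1 (unpair2 s)))
     (code_cons (h (unpair1 s) (unpair1 (unpair2 s)) (unpair2 (unpair2 s))) (unpair2 (unpair2 s))))"
  have iter: "(?step ^^ n) (pair a (pair 0 0)) = pair a (pair n (cov_history h a n))" for n a
    by (induction n) (auto simp: pair_0_0)
  have step: "computable ?step"
    by (intro computable_pair computable_unpair1 computable_id computable_Suc computable_unpair2
        computable_code_cons h)
  have "computable (\<lambda>x. unpair2 (unpair2 ((?step ^^ g x) (pair (f x) (pair 0 0)))))"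
    by (intro computable_unpair2 computable_funpow[OF step g] computable_pair f computable_const)
  then have "computable (\<lambda>x. cov_history h (f x) (g x))"
    by (simp add: iter)
  from computable_compose_uncurried3[OF h f g this] show ?thesis
    by (simp add: cov_rec_def)
qed

section \<open>Evaluating and checking coded formulas\<close>

lemma enc_form_Var: "enc_form (Var n) = pair 0 n"
  by (simp add: pair_def)

lemma enc_form_App: "enc_form (App c fs) = pair 1 (pair c (list_encode (map enc_form fs)))"
  by (simp add: pair_def)

declare enc_form.simps [simp del]

lemma enc_form_child_less: "f \<in> set fs \<Longrightarrow> enc_form f < enc_form (App c fs)"
proof -
  assume "f \<in> set fs"
  then have "enc_form f < list_encode (map enc_form fs)" by (intro less_list_encode) auto
  also have "\<dots> \<le> pair c (list_encode (map enc_form fs))" by (rule le_pair2)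
  also have "\<dots> < pair 1 (pair c (list_encode (map enc_form fs)))" by (rule less_pair_1)
  finally show ?thesis by (simp add: enc_form_App)
qed

fun vars :: "form \<Rightarrow> nat set" where
  "vars (Var n) = {n}"
| "vars (App c fs) = (\<Union>f\<in>set fs. vars f)"

lemma var_le_enc_form: "n \<in> vars F \<Longrightarrow> n \<le> enc_form F"
proof (induction F)
  case (Var k)
  then show ?case using le_pair2[of n 0] by (simp add: enc_form_Var)
next
  case (App c fs)
  then obtain f where f: "f \<in> set fs" "n \<in> vars f" by auto
  then have "n \<le> enc_form f" using App.IH by blast
  also have "\<dots> < enc_form (App c fs)" by (rule enc_form_child_less[OF f(1)])
  finally show ?case by simp
qed

lemma evalf_cong_vars: "(\<And>n. n \<in> vars F \<Longrightarrow> v n = v' n) \<Longrightarrow> evalf G v F = evalf G v' F"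
proof (induction F)
  case (App c fs)
  then have "map (evalf G v) fs = map (evalf G v') fs" by auto
  then show ?case by (metis evalf.simps(2))
qed simp

definition list_valuation :: "nat list \<Rightarrow> nat \<Rightarrow> nat" where
  "list_valuation ws n = (if n < length ws then ws ! n else 1)"

definition code_valuation :: "nat \<Rightarrow> nat \<Rightarrow> nat" where
  "code_valuation w n = (if n < code_length w then code_nth w n else 1)"

lemma code_valuation_list_encode: "code_valuation (list_encode ws) = list_valuation ws"
  by (auto simp: code_valuation_def list_valuation_def)

lemma enc_code_eq: "enc_code k = pair (list_encode (fst k)) (list_encode (map enc_entry (snd k)))"
  by (simp add: enc_code_def pair_def)

lemma enc_entry_eq: "enc_entry e = pair (pair (fst (fst e)) (list_encode (snd (fst e)))) (snd e)"
  by (simp add: enc_entry_def pair_def)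

lemma code_lookup_enc_entries:
  "code_lookup (list_encode (map enc_entry tbl)) (pair c (list_encode args)) =
     (case map_of tbl (c, args) of Some y \<Rightarrow> y | None \<Rightarrow> 1)"
  by (rule code_lookup_list_encode) (auto simp: enc_entry_eq list_encode_eq prod_eq_iff)

text \<open>The state \<open>s = pair H j\<close> holds the history \<open>H\<close> of a course-of-values recursion at
  \<open>j\<close>; the value at a smaller code \<open>ch\<close> sits at position \<open>j - 1 - ch\<close> of \<open>H\<close>.\<close>

definition child_value :: "nat \<Rightarrow> nat \<Rightarrow> nat" where
  "child_value s ch = code_nth (unpair1 s) (unpair2 s - 1 - ch)"

text \<open>In \<open>evalf_step x j H\<close>, \<open>x\<close> pairs the code of a logic with the code of a list of values,
  and \<open>j\<close> is \<open>pair 0 n\<close> for \<open>Var n\<close> or \<open>pair 1 (pair c args)\<close> for an application.\<close>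

definition evalf_step :: "nat \<Rightarrow> nat \<Rightarrow> nat \<Rightarrow> nat" where
  "evalf_step x j H =
     (if unpair1 j = 0 then code_valuation (unpair2 x) (unpair2 j)
      else code_lookup (unpair2 (unpair1 x))
             (pair (unpair1 (unpair2 j)) (code_map child_value (pair H j) (unpair2 (unpair2 j)))))"

definition code_evalf :: "nat \<Rightarrow> nat \<Rightarrow> nat \<Rightarrow> nat" where
  "code_evalf z w j = cov_rec evalf_step (pair z w) j"

lemma code_evalf_enc_form:
  "code_evalf (enc_code k) (list_encode ws) (enc_form F) = evalf (snd (logic_of_code k)) (list_valuation ws) F"
proof (induction F)
  case (Var n)
  show ?case by (simp add: code_evalf_def cov_rec_def evalf_step_def enc_form_Var code_valuation_list_encode)
next
  case (App c fs)
  let ?x = "pair (enc_code k) (list_encode ws)"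
  let ?j = "enc_form (App c fs)"
  have "child_value (pair (cov_history evalf_step ?x ?j) ?j) (enc_form f)
      = evalf (snd (logic_of_code k)) (list_valuation ws) f" if "f \<in> set fs" for f
    using code_nth_cov_history[OF enc_form_child_less[OF that]] App.IH[OF that]
    by (simp add: child_value_def code_evalf_def)
  then have "code_map child_value (pair (cov_history evalf_step ?x ?j) ?j) (list_encode (map enc_form fs))
      = list_encode (map (evalf (snd (logic_of_code k)) (list_valuation ws)) fs)"
    by (simp add: code_map_list_encode cong: map_cong)
  then show ?case
    by (simp add: code_evalf_def cov_rec_def evalf_step_def enc_form_App enc_code_eq
        code_lookup_enc_entries logic_of_code_def)
qed

lemma computable_code_evalf:
  "computable f \<Longrightarrow> computable g \<Longrightarrow> computable h \<Longrightarrow> computable (\<lambda>x. code_evalf (f x) (g x) (h x))"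
proof -
  have "computable (\<lambda>y. child_value (unpair1 y) (unpair2 y))"
    unfolding child_value_def
    by (intro computable_code_nth computable_unpair1 computable_unpair2 computable_diff computable_id
        computable_const)
  then have "computable (\<lambda>y. evalf_step (unpair1 y) (unpair1 (unpair2 y)) (unpair2 (unpair2 y)))"
    unfolding evalf_step_def code_valuation_def
    by (intro computable_If decidable_eq decidable_less computable_code_lookup computable_pair
        computable_code_map computable_code_nth computable_code_length computable_unpair1
        computable_unpair2 computable_id computable_const)
  then show "computable f \<Longrightarrow> computable g \<Longrightarrow> computable h \<Longrightarrow> ?thesis"
    unfolding code_evalf_def by (intro computable_cov_rec computable_pair)
qed

definition wf_step :: "nat \<Rightarrow> nat \<Rightarrow> nat \<Rightarrow> nat" where
  "wf_step x j H =
     (if unpair1 j = 0 then of_bool (unpair2 j < unpair2 x)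
      else if unpair1 j = 1 then
        of_bool (unpair1 (unpair2 j) < code_length (unpair1 x)
          \<and> code_length (unpair2 (unpair2 j)) = code_nth (unpair1 x) (unpair1 (unpair2 j))
          \<and> (\<forall>i<code_length (unpair2 (unpair2 j)). code_nth H (j - 1 - code_nth (unpair2 (unpair2 j)) i) = 1))
      else 0)"

definition code_wf_form :: "nat \<Rightarrow> nat \<Rightarrow> nat \<Rightarrow> nat" where
  "code_wf_form A n j = cov_rec wf_step (pair A n) j"

lemma computable_code_wf_form:
  "computable f \<Longrightarrow> computable g \<Longrightarrow> computable h \<Longrightarrow> computable (\<lambda>x. code_wf_form (f x) (g x) (h x))"
proof -
  have "computable (\<lambda>y. wf_step (unpair1 y) (unpair1 (unpair2 y)) (unpair2 (unpair2 y)))"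
    unfolding wf_step_def
    by (intro computable_If computable_of_bool decidable_eq decidable_less decidable_conj
        decidable_all_less computable_unpair1 computable_unpair2 computable_id computable_const
        computable_code_length computable_code_nth computable_diff)
  then show "computable f \<Longrightarrow> computable g \<Longrightarrow> computable h \<Longrightarrow> ?thesis"
    unfolding code_wf_form_def by (intro computable_cov_rec computable_pair)
qed

lemma code_wf_form_enc_form:
  "code_wf_form (list_encode ar) n (enc_form F) = of_bool (wf_form ar F \<and> vars F \<subseteq> {..<n})"
proof (induction F)
  case (Var x)
  then show ?case by (simp add: code_wf_form_def cov_rec_def wf_step_def enc_form_Var)
next
  case (App c fs)
  let ?x = "pair (list_encode ar) n"
  let ?j = "enc_form (App c fs)"
  let ?H = "cov_history wf_step ?x ?j"
  have "code_nth ?H (?j - 1 - enc_form f) = of_bool (wf_form ar f \<and> vars f \<subseteq> {..<n})"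
    if "f \<in> set fs" for f
    using code_nth_cov_history[OF enc_form_child_less[OF that]] App.IH[OF that]
    by (simp add: code_wf_form_def)
  then have "(\<forall>i<length fs. code_nth ?H (?j - 1 - enc_form (fs ! i)) = 1) \<longleftrightarrow>
        (\<forall>f\<in>set fs. wf_form ar f \<and> vars f \<subseteq> {..<n})"
    by (auto simp: all_set_conv_all_nth)
  then show ?case
    by (auto simp: code_wf_form_def cov_rec_def wf_step_def enc_form_App)
qed

lemma unpair2_less_self: "unpair1 j \<noteq> 0 \<Longrightarrow> unpair2 j < j"
proof -
  assume "unpair1 j \<noteq> 0"
  have "unpair2 j < pair 1 (unpair2 j)" by (rule less_pair_1)
  also have "\<dots> \<le> pair (unpair1 j) (unpair2 j)"
    using \<open>unpair1 j \<noteq> 0\<close> by (intro pair_mono) auto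
  finally show ?thesis by simp
qed

lemma wf_step_App_eq_1_iff:
  assumes "unpair1 j = 1"
  shows "wf_step x j H = 1 \<longleftrightarrow> unpair1 (unpair2 j) < code_length (unpair1 x)
    \<and> code_length (unpair2 (unpair2 j)) = code_nth (unpair1 x) (unpair1 (unpair2 j))
    \<and> (\<forall>i<code_length (unpair2 (unpair2 j)). code_nth H (j - 1 - code_nth (unpair2 (unpair2 j)) i) = 1)"
  using assms by (simp add: wf_step_def)

lemma code_wf_form_imp_enc_form: "code_wf_form A n j = 1 \<Longrightarrow> \<exists>F. j = enc_form F"
proof (induction j rule: less_induct)
  case (less j)
  let ?H = "cov_history wf_step (pair A n) j"
  let ?args = "unpair2 (unpair2 j)"
  have step: "wf_step (pair A n) j ?H = 1"
    using less.prems by (simp add: code_wf_form_def cov_rec_def)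
  show ?case
  proof (cases "unpair1 j = 0")
    case True
    then have "j = enc_form (Var (unpair2 j))" by (metis enc_form_Var pair_unpair)
    then show ?thesis by blast
  next
    case False
    with step have j1: "unpair1 j = 1"
      by (auto simp: wf_step_def split: if_splits)
    with step have children: "\<forall>i<code_length ?args. code_nth ?H (j - 1 - code_nth ?args i) = 1"
      using wf_step_App_eq_1_iff by blast
    define es where "es = list_decode ?args"
    have args: "?args = list_encode es" by (simp add: es_def)
    have "\<exists>F. e = enc_form F" if e: "e \<in> set es" for e
    proof -
      obtain i where i: "i < length es" "es ! i = e" using e by (auto simp: in_set_conv_nth)
      have "e < ?args" using less_list_encode[OF e] args by simp
      also have "?args \<le> unpair2 j" using le_pair2[of ?args "unpair1 (unpair2 j)"] by simp
      also have "unpair2 j < j" using False by (rule unpair2_less_self)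
      finally have "e < j" .
      moreover have "code_nth ?H (j - 1 - e) = 1" using children i args by auto
      ultimately have "code_wf_form A n e = 1"
        using code_nth_cov_history[of e j] by (simp add: code_wf_form_def)
      with \<open>e < j\<close> show ?thesis by (rule less.IH)
    qed
    then obtain fs where "map enc_form fs = es"
      using ex_map_conv[of es enc_form] by metis
    then have "enc_form (App (unpair1 (unpair2 j)) fs) = pair 1 (pair (unpair1 (unpair2 j)) ?args)"
      using args by (simp add: enc_form_App)
    also have "\<dots> = j" using j1 by (metis pair_unpair)
    finally show ?thesis by (rule exI[where x = "App _ _", OF sym])
  qed
qed

lemma code_wf_form_eq_1_iff:
  "code_wf_form (list_encode ar) n j = 1 \<longleftrightarrow> (\<exists>F. j = enc_form F \<and> wf_form ar F \<and> vars F \<subseteq> {..<n})"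
proof
  assume wf: "code_wf_form (list_encode ar) n j = 1"
  then obtain F where F: "j = enc_form F" using code_wf_form_imp_enc_form by blast
  with wf have "of_bool (wf_form ar F \<and> vars F \<subseteq> {..<n}) = (1 :: nat)"
    by (simp only: code_wf_form_enc_form)
  then have "wf_form ar F \<and> vars F \<subseteq> {..<n}" by (simp add: of_bool_def split: if_splits)
  with F show "\<exists>F. j = enc_form F \<and> wf_form ar F \<and> vars F \<subseteq> {..<n}" by blast
qed (auto simp: code_wf_form_enc_form)

section \<open>Tautologies and finite sets of assignments\<close>

definition assignments :: "nat \<Rightarrow> nat \<Rightarrow> nat list set" where
  "assignments n m = {ws. length ws = n \<and> set ws \<subseteq> {1..m}}"

lemma finite_assignments: "finite (assignments n m)"
  using finite_lists_length_eq[of "{1..m}" n] by (simp add: assignments_def conj_commute)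

lemma card_assignments: "card (assignments n m) = m ^ n"
  unfolding assignments_def using card_lists_length_eq[of "{1..m}" n] by (simp add: conj_commute)

lemma valuation_list_valuation: "1 \<le> m \<Longrightarrow> ws \<in> assignments n m \<Longrightarrow> valuation m (list_valuation ws)"
  by (auto simp: valuation_def list_valuation_def assignments_def dest!: nth_mem)

lemma all_valuations_iff_assignments:
  assumes m: "1 \<le> m" and local: "\<And>v v'. (\<And>k. k < n \<Longrightarrow> v k = v' k) \<Longrightarrow> P v \<longleftrightarrow> P v'"
  shows "(\<forall>v. valuation m v \<longrightarrow> P v) \<longleftrightarrow> (\<forall>ws\<in>assignments n m. P (list_valuation ws))"
proof
  assume "\<forall>v. valuation m v \<longrightarrow> P v"
  then show "\<forall>ws\<in>assignments n m. P (list_valuation ws)"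
    using valuation_list_valuation[OF m] by blast
next
  assume all: "\<forall>ws\<in>assignments n m. P (list_valuation ws)"
  show "\<forall>v. valuation m v \<longrightarrow> P v"
  proof (intro allI impI)
    fix v assume "valuation m v"
    then have "map v [0..<n] \<in> assignments n m"
      by (auto simp: valuation_def assignments_def)
    with all have "P (list_valuation (map v [0..<n]))" by blast
    moreover have "list_valuation (map v [0..<n]) k = v k" if "k < n" for k
      using that by (simp add: list_valuation_def)
    ultimately show "P v" using local by blast
  qed
qed

lemma mem_Taut_iff_assignments:
  assumes "1 \<le> m" "vars F \<subseteq> {..<n}"
  shows "F \<in> Taut ar m L \<longleftrightarrow>
    wf_form ar F \<and> (\<forall>ws\<in>assignments n m. evalf (snd L) (list_valuation ws) F \<in> fst L)"
proof -
  have "(\<forall>v. valuation m v \<longrightarrow> evalf (snd L) v F \<in> fst L) \<longleftrightarrow>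
      (\<forall>ws\<in>assignments n m. evalf (snd L) (list_valuation ws) F \<in> fst L)"
  proof (rule all_valuations_iff_assignments[OF assms(1)])
    fix v v' :: "nat \<Rightarrow> nat" assume "\<And>k. k < n \<Longrightarrow> v k = v' k"
    then have "evalf (snd L) v F = evalf (snd L) v' F"
      using assms(2) by (intro evalf_cong_vars) auto
    then show "evalf (snd L) v F \<in> fst L \<longleftrightarrow> evalf (snd L) v' F \<in> fst L" by simp
  qed
  then show ?thesis by (simp add: Taut_def satisfies_def)
qed

lemma sound_rule_iff_assignments:
  assumes "1 \<le> m" "\<forall>F\<in>set ps \<union> {c}. vars F \<subseteq> {..<n}"
  shows "(\<forall>v. valuation m v \<longrightarrow> (\<forall>p\<in>set ps. satisfies L v p) \<longrightarrow> satisfies L v c) \<longleftrightarrow>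
    (\<forall>ws\<in>assignments n m. (\<forall>p\<in>set ps. evalf (snd L) (list_valuation ws) p \<in> fst L) \<longrightarrow>
       evalf (snd L) (list_valuation ws) c \<in> fst L)"
  unfolding satisfies_def
proof (rule all_valuations_iff_assignments[OF assms(1)])
  fix v v' :: "nat \<Rightarrow> nat" assume "\<And>k. k < n \<Longrightarrow> v k = v' k"
  then have "evalf (snd L) v F = evalf (snd L) v' F" if "F \<in> set ps \<union> {c}" for F
    using assms(2) that by (intro evalf_cong_vars) auto
  then show "((\<forall>p\<in>set ps. evalf (snd L) v p \<in> fst L) \<longrightarrow> evalf (snd L) v c \<in> fst L) \<longleftrightarrow>
      ((\<forall>p\<in>set ps. evalf (snd L) v' p \<in> fst L) \<longrightarrow> evalf (snd L) v' c \<in> fst L)"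
    by simp
qed

definition code_assignment :: "nat \<Rightarrow> nat \<Rightarrow> nat \<Rightarrow> bool" where
  "code_assignment n m w \<longleftrightarrow> code_length w = n \<and> (\<forall>i<n. 1 \<le> code_nth w i \<and> code_nth w i \<le> m)"

lemma code_assignment_list_encode: "code_assignment n m (list_encode ws) \<longleftrightarrow> ws \<in> assignments n m"
proof -
  have "code_assignment n m (list_encode ws) \<longleftrightarrow>
      length ws = n \<and> (\<forall>i<length ws. 1 \<le> ws ! i \<and> ws ! i \<le> m)"
    unfolding code_assignment_def by auto
  also have "\<dots> \<longleftrightarrow> length ws = n \<and> (\<forall>x\<in>set ws. 1 \<le> x \<and> x \<le> m)"
    by (simp only: all_set_conv_all_nth)
  finally show ?thesis by (auto simp: assignments_def)
qed

text \<open>Codes of assignments are bounded by the code of the largest one, so a bounded search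
  finds them all.\<close>

lemma all_code_assignments_iff:
  "(\<forall>w<Suc (list_encode (replicate n m)). code_assignment n m w \<longrightarrow> Q w) \<longleftrightarrow>
    (\<forall>ws\<in>assignments n m. Q (list_encode ws))"
proof
  assume all: "\<forall>w<Suc (list_encode (replicate n m)). code_assignment n m w \<longrightarrow> Q w"
  show "\<forall>ws\<in>assignments n m. Q (list_encode ws)"
  proof
    fix ws assume ws: "ws \<in> assignments n m"
    then have "list_encode ws \<le> list_encode (replicate n m)"
      by (intro list_encode_le_replicate) (auto simp: assignments_def)
    with all ws show "Q (list_encode ws)" by (simp add: code_assignment_list_encode)
  qed
next
  assume "\<forall>ws\<in>assignments n m. Q (list_encode ws)"
  then show "\<forall>w<Suc (list_encode (replicate n m)). code_assignment n m w \<longrightarrow> Q w"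
    by (metis code_assignment_list_encode list_decode_inverse)
qed

definition code_designated :: "nat \<Rightarrow> nat \<Rightarrow> bool" where
  "code_designated z a \<longleftrightarrow> (\<exists>i<code_length (unpair1 z). code_nth (unpair1 z) i = a)"

lemma code_designated_enc_code: "code_designated (enc_code k) a \<longleftrightarrow> a \<in> set (fst k)"
  unfolding code_designated_def enc_code_eq by (auto simp: in_set_conv_nth)

definition code_Taut :: "nat \<Rightarrow> nat \<Rightarrow> nat \<Rightarrow> nat \<Rightarrow> bool" where
  "code_Taut z m n j \<longleftrightarrow> (\<forall>w<Suc (list_encode (replicate n m)). code_assignment n m w \<longrightarrow>
     code_designated z (code_evalf z w j))"

lemma code_Taut_enc_form:
  assumes "1 \<le> m" "wf_form ar F" "vars F \<subseteq> {..<n}"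
  shows "code_Taut (enc_code k) m n (enc_form F) \<longleftrightarrow> F \<in> Taut ar m (logic_of_code k)"
  using assms
  by (simp add: code_Taut_def all_code_assignments_iff mem_Taut_iff_assignments code_evalf_enc_form
      code_designated_enc_code logic_of_code_def)

definition code_sound_rule :: "nat \<Rightarrow> nat \<Rightarrow> nat \<Rightarrow> nat \<Rightarrow> bool" where
  "code_sound_rule z m n r \<longleftrightarrow> (\<forall>w<Suc (list_encode (replicate n m)). code_assignment n m w \<longrightarrow>
     (\<forall>t<code_length (unpair1 r). code_designated z (code_evalf z w (code_nth (unpair1 r) t))) \<longrightarrow>
     code_designated z (code_evalf z w (unpair2 r)))"

lemma enc_rule_eq: "enc_rule (ps, c) = pair (list_encode (map enc_form ps)) (enc_form c)"
  by (simp add: enc_rule_def pair_def)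

lemma code_sound_rule_enc_rule:
  assumes "1 \<le> m" "\<forall>F\<in>set ps \<union> {c}. vars F \<subseteq> {..<n}"
  shows "code_sound_rule (enc_code k) m n (enc_rule (ps, c)) \<longleftrightarrow>
    (\<forall>v. valuation m v \<longrightarrow> (\<forall>p\<in>set ps. satisfies (logic_of_code k) v p) \<longrightarrow>
       satisfies (logic_of_code k) v c)"
proof -
  have "code_sound_rule (enc_code k) m n (enc_rule (ps, c)) \<longleftrightarrow>
      (\<forall>ws\<in>assignments n m. (\<forall>p\<in>set ps. evalf (snd (logic_of_code k)) (list_valuation ws) p \<in> set (fst k))
         \<longrightarrow> evalf (snd (logic_of_code k)) (list_valuation ws) c \<in> set (fst k))"
    by (simp add: code_sound_rule_def all_code_assignments_iff code_evalf_enc_form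
        code_designated_enc_code enc_rule_eq all_set_conv_all_nth)
  also have "\<dots> \<longleftrightarrow>
      (\<forall>v. valuation m v \<longrightarrow> (\<forall>p\<in>set ps. satisfies (logic_of_code k) v p) \<longrightarrow>
         satisfies (logic_of_code k) v c)"
    using sound_rule_iff_assignments[OF assms, of "logic_of_code k"] by (simp add: logic_of_code_def)
  finally show ?thesis .
qed

lemma decidable_code_assignment:
  "decidable (\<lambda>y. code_assignment (unpair1 y) (unpair1 (unpair2 y)) (unpair2 (unpair2 y)))"
  unfolding code_assignment_def
  by (intro decidable_conj decidable_eq decidable_all_less decidable_le computable_code_length
      computable_code_nth computable_unpair1 computable_unpair2 computable_id computable_const)

lemma decidable_code_designated: "decidable (\<lambda>y. code_designated (unpair1 y) (unpair2 y))"
  unfolding code_designated_def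
  by (intro decidable_ex_less decidable_eq computable_code_length computable_code_nth
      computable_unpair1 computable_unpair2 computable_id)

lemma decidable_code_Taut:
  "decidable (\<lambda>y. code_Taut (unpair1 y) (unpair1 (unpair2 y)) (unpair1 (unpair2 (unpair2 y)))
     (unpair2 (unpair2 (unpair2 y))))"
  unfolding code_Taut_def
  by (intro decidable_all_less decidable_imp decidable_compose_uncurried3[OF decidable_code_assignment]
      decidable_compose_uncurried[OF decidable_code_designated] computable_code_evalf computable_Suc
      computable_list_encode_replicate computable_unpair1 computable_unpair2 computable_id)

lemma decidable_code_sound_rule:
  "decidable (\<lambda>y. code_sound_rule (unpair1 y) (unpair1 (unpair2 y)) (unpair1 (unpair2 (unpair2 y)))
     (unpair2 (unpair2 (unpair2 y))))"
  unfolding code_sound_rule_def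
  by (intro decidable_all_less decidable_imp decidable_compose_uncurried3[OF decidable_code_assignment]
      decidable_compose_uncurried[OF decidable_code_designated] computable_code_evalf computable_Suc
      computable_list_encode_replicate computable_code_nth computable_code_length computable_unpair1
      computable_unpair2 computable_id)

section \<open>Deciding inclusion of tautology sets\<close>

fun depth :: "form \<Rightarrow> nat" where
  "depth (Var n) = 0"
| "depth (App c fs) = Suc (Max (insert 0 (depth ` set fs)))"

lemma depth_child_less: "f \<in> set fs \<Longrightarrow> depth f < depth (App c fs)"
  by (simp add: le_imp_less_Suc)

fun rename :: "(nat \<Rightarrow> nat) \<Rightarrow> form \<Rightarrow> form" where
  "rename g (Var n) = Var (g n)"
| "rename g (App c fs) = App c (map (rename g) fs)"

lemma evalf_rename: "evalf G v (rename g F) = evalf G (v \<circ> g) F"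
  by (induction F) (simp_all add: comp_def cong: map_cong)

lemma wf_form_rename: "wf_form ar (rename g F) = wf_form ar F"
  by (induction F) auto

lemma vars_rename: "vars (rename g F) = g ` vars F"
  by (induction F) auto

lemma rename_mem_Taut: "F \<in> Taut ar m L \<Longrightarrow> rename g F \<in> Taut ar m L"
  by (simp add: Taut_def satisfies_def evalf_rename wf_form_rename valuation_def)

text \<open>A falsifying valuation takes at most \<open>m\<close> values, so identifying the variables on which
  it agrees yields a falsified substitution instance in the variables \<open>X\<^sub>1, \<dots>, X\<^sub>m\<close>.\<close>

lemma Taut_subset_iff_few_vars:
  assumes m: "1 \<le> m"
  shows "Taut ar m L1 \<subseteq> Taut ar m L2 \<longleftrightarrow> (\<forall>F\<in>Taut ar m L1. vars F \<subseteq> {..<m} \<longrightarrow> F \<in> Taut ar m L2)"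
proof (intro iffI subsetI)
  fix F assume few: "\<forall>F\<in>Taut ar m L1. vars F \<subseteq> {..<m} \<longrightarrow> F \<in> Taut ar m L2"
    and F1: "F \<in> Taut ar m L1"
  show "F \<in> Taut ar m L2"
  proof (rule ccontr)
    assume "F \<notin> Taut ar m L2"
    with F1 obtain v where v: "valuation m v" "\<not> satisfies L2 v F" by (auto simp: Taut_def)
    define g where "g n = v n - 1" for n
    define u where "u n = (if n < m then Suc n else 1)" for n
    have "g n < m" for n
    proof -
      have "v n \<in> {1..m}" using v(1) by (simp add: valuation_def)
      then show ?thesis by (auto simp: g_def)
    qed
    then have "vars (rename g F) \<subseteq> {..<m}" by (auto simp: vars_rename)
    with few F1 have "rename g F \<in> Taut ar m L2" by (simp add: rename_mem_Taut)
    moreover have "valuation m u" using m by (auto simp: valuation_def u_def)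
    moreover have "u \<circ> g = v"
    proof
      fix n
      have "v n \<in> {1..m}" using v(1) by (simp add: valuation_def)
      then show "(u \<circ> g) n = v n" by (auto simp: u_def g_def)
    qed
    ultimately have "satisfies L2 v F" by (auto simp: Taut_def satisfies_def evalf_rename)
    with v(2) show False ..
  qed
qed auto

lemma evalf_in_values:
  assumes L: "is_logic ar m L" and v: "\<And>n. v n \<in> {1..m}"
  shows "wf_form ar F \<Longrightarrow> evalf (snd L) v F \<in> {1..m}"
proof (induction F)
  case (App c fs)
  then have "set (map (evalf (snd L) v) fs) \<subseteq> {1..m}" by auto
  with App.prems L show ?case by (simp add: is_logic_def)
qed (use v in simp)

definition bounded_form :: "nat list \<Rightarrow> nat \<Rightarrow> nat \<Rightarrow> form \<Rightarrow> bool" where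
  "bounded_form ar n d F \<longleftrightarrow> wf_form ar F \<and> vars F \<subseteq> {..<n} \<and> depth F \<le> d"

definition joint_table :: "nat \<Rightarrow> logic \<Rightarrow> logic \<Rightarrow> form \<Rightarrow> nat list \<Rightarrow> nat \<times> nat" where
  "joint_table m L1 L2 F = (\<lambda>ws\<in>assignments m m.
     (evalf (snd L1) (list_valuation ws) F, evalf (snd L2) (list_valuation ws) F))"

definition joint_tables :: "nat list \<Rightarrow> nat \<Rightarrow> logic \<Rightarrow> logic \<Rightarrow> nat \<Rightarrow> (nat list \<Rightarrow> nat \<times> nat) set" where
  "joint_tables ar m L1 L2 d = joint_table m L1 L2 ` {F. bounded_form ar m d F}"

lemma joint_tables_Suc: "joint_tables ar m L1 L2 d \<subseteq> joint_tables ar m L1 L2 (Suc d)"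
  unfolding joint_tables_def bounded_form_def by auto

lemma joint_tables_subset:
  assumes "1 \<le> m" "is_logic ar m L1" "is_logic ar m L2"
  shows "joint_tables ar m L1 L2 d \<subseteq> (\<Pi>\<^sub>E ws\<in>assignments m m. {1..m} \<times> {1..m})"
proof
  fix t assume "t \<in> joint_tables ar m L1 L2 d"
  then obtain F where F: "bounded_form ar m d F" "t = joint_table m L1 L2 F"
    unfolding joint_tables_def by auto
  have "evalf (snd L) (list_valuation ws) F \<in> {1..m}"
    if "ws \<in> assignments m m" "is_logic ar m L" for ws L
    using evalf_in_values[OF that(2)] valuation_list_valuation[OF assms(1) that(1)] F(1)
    by (simp add: valuation_def bounded_form_def)
  with F(2) assms(2,3) show "t \<in> (\<Pi>\<^sub>E ws\<in>assignments m m. {1..m} \<times> {1..m})"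
    by (simp add: joint_table_def)
qed

lemma card_joint_table_space:
  "card (\<Pi>\<^sub>E ws\<in>assignments m m. {1..m} \<times> {1..m}) = (m * m) ^ (m ^ m)"
  by (simp add: card_PiE finite_assignments card_assignments card_cartesian_product)

lemma joint_table_App_cong:
  assumes "\<And>f. f \<in> set fs \<Longrightarrow> joint_table m L1 L2 (r f) = joint_table m L1 L2 f"
  shows "joint_table m L1 L2 (App c (map r fs)) = joint_table m L1 L2 (App c fs)"
  unfolding joint_table_def
proof (rule restrict_ext)
  fix ws assume ws: "ws \<in> assignments m m"
  have "evalf (snd L1) (list_valuation ws) (r f) = evalf (snd L1) (list_valuation ws) f \<and>
      evalf (snd L2) (list_valuation ws) (r f) = evalf (snd L2) (list_valuation ws) f"
    if "f \<in> set fs" for f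
    using fun_cong[OF assms[OF that], of ws] ws by (simp add: joint_table_def)
  then have args: "map (evalf (snd L1) (list_valuation ws)) (map r fs) = map (evalf (snd L1) (list_valuation ws)) fs"
    "map (evalf (snd L2) (list_valuation ws)) (map r fs) = map (evalf (snd L2) (list_valuation ws)) fs"
    by auto
  show "(evalf (snd L1) (list_valuation ws) (App c (map r fs)), evalf (snd L2) (list_valuation ws) (App c (map r fs)))
      = (evalf (snd L1) (list_valuation ws) (App c fs), evalf (snd L2) (list_valuation ws) (App c fs))"
    by (simp only: evalf.simps args)
qed

text \<open>The joint tables of depth \<open>d + 1\<close> are determined by those of depth \<open>d\<close>, because
  replacing the arguments of a formula by formulas with the same joint tables does not change its own.\<close>

lemma joint_tables_Suc_Suc:
  assumes eq: "joint_tables ar m L1 L2 d = joint_tables ar m L1 L2 (Suc d)"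
  shows "joint_tables ar m L1 L2 (Suc (Suc d)) \<subseteq> joint_tables ar m L1 L2 (Suc d)"
proof
  fix t assume "t \<in> joint_tables ar m L1 L2 (Suc (Suc d))"
  then obtain F where F: "bounded_form ar m (Suc (Suc d)) F" "t = joint_table m L1 L2 F"
    unfolding joint_tables_def by auto
  show "t \<in> joint_tables ar m L1 L2 (Suc d)"
  proof (cases F)
    case (Var n)
    with F show ?thesis by (auto simp: joint_tables_def bounded_form_def)
  next
    case (App c fs)
    have "\<exists>g. bounded_form ar m d g \<and> joint_table m L1 L2 g = joint_table m L1 L2 f"
      if f: "f \<in> set fs" for f
    proof -
      have "bounded_form ar m (Suc d) f"
        using F(1) depth_child_less[OF f, of c] App f by (auto simp: bounded_form_def)
      then have "joint_table m L1 L2 f \<in> joint_tables ar m L1 L2 d"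
        using eq unfolding joint_tables_def by auto
      then show ?thesis unfolding joint_tables_def by auto
    qed
    then obtain r where r: "\<And>f. f \<in> set fs \<Longrightarrow>
        bounded_form ar m d (r f) \<and> joint_table m L1 L2 (r f) = joint_table m L1 L2 f"
      by metis
    let ?G = "App c (map r fs)"
    have "bounded_form ar m (Suc d) ?G"
    proof -
      have "wf_form ar ?G" using F(1) App r by (auto simp: bounded_form_def)
      moreover have "vars ?G \<subseteq> {..<m}" using r by (fastforce simp: bounded_form_def)
      moreover have "\<forall>x\<in>depth ` set (map r fs). x \<le> d" using r by (auto simp: bounded_form_def)
      then have "Max (insert 0 (depth ` set (map r fs))) \<le> d" by (subst Max_le_iff) auto
      ultimately show ?thesis by (simp add: bounded_form_def)
    qed
    moreover have "joint_table m L1 L2 ?G = joint_table m L1 L2 F"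
      unfolding App using r by (intro joint_table_App_cong) simp
    ultimately show ?thesis
      using F(2) unfolding joint_tables_def by (metis image_eqI mem_Collect_eq)
  qed
qed

lemma chain_stationary_bound:
  fixes S :: "nat \<Rightarrow> 'a set"
  assumes mono: "\<And>d. S d \<subseteq> S (Suc d)" and bounded: "\<And>d. S d \<subseteq> U" "finite U"
    and repeat: "\<And>d. S d = S (Suc d) \<Longrightarrow> S (Suc (Suc d)) \<subseteq> S (Suc d)"
  shows "S e \<subseteq> S (card U)"
proof -
  have mono': "S d \<subseteq> S d'" if "d \<le> d'" for d d'
    using lift_Suc_mono_le[of S, OF mono that] .
  have "\<exists>d\<le>card U. S d = S (Suc d)"
  proof (rule ccontr)
    assume "\<not> ?thesis"
    then have strict: "S d \<subset> S (Suc d)" if "d \<le> card U" for d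
      using mono that by blast
    have "d \<le> card (S d)" if "d \<le> Suc (card U)" for d
      using that
    proof (induction d)
      case (Suc d)
      with strict have "card (S d) < card (S (Suc d))"
        using finite_subset[OF bounded] by (intro psubset_card_mono) auto
      with Suc show ?case by simp
    qed simp
    then have "Suc (card U) \<le> card (S (Suc (card U)))" by simp
    also have "\<dots> \<le> card U" by (rule card_mono[OF bounded(2,1)])
    finally show False by simp
  qed
  then obtain d where d: "d \<le> card U" "S d = S (Suc d)" by blast
  have stationary: "S (d + k) = S d \<and> S (Suc (d + k)) = S d" for k
  proof (induction k)
    case (Suc k)
    then have "S (Suc (Suc (d + k))) \<subseteq> S (Suc (d + k))" by (intro repeat) simp
    with Suc mono[of "Suc (d + k)"] show ?case by simp
  qed (use d(2) in simp)
  have "S e \<subseteq> S (d + e)" by (rule mono') simp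
  also have "\<dots> = S d" using stationary by blast
  also have "\<dots> \<subseteq> S (card U)" by (rule mono'[OF d(1)])
  finally show ?thesis .
qed

lemma joint_tables_subset_depth_bound:
  assumes "1 \<le> m" "is_logic ar m L1" "is_logic ar m L2"
  shows "joint_tables ar m L1 L2 e \<subseteq> joint_tables ar m L1 L2 ((m * m) ^ (m ^ m))"
proof -
  have "joint_tables ar m L1 L2 e \<subseteq>
      joint_tables ar m L1 L2 (card (\<Pi>\<^sub>E ws\<in>assignments m m. {1..m} \<times> {1..m}))"
  proof (rule chain_stationary_bound[where S = "joint_tables ar m L1 L2"])
    show "finite (\<Pi>\<^sub>E ws\<in>assignments m m. {1..m} \<times> {1..m})"
      by (simp add: finite_PiE finite_assignments)
  qed (fact joint_tables_Suc joint_tables_subset[OF assms] joint_tables_Suc_Suc)+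
  then show ?thesis unfolding card_joint_table_space .
qed

lemma mem_Taut_iff_joint_table_eq:
  assumes m: "1 \<le> m" and eq: "joint_table m L1 L2 F = joint_table m L1 L2 G"
    and F: "wf_form ar F" "vars F \<subseteq> {..<m}" and G: "wf_form ar G" "vars G \<subseteq> {..<m}"
  shows "F \<in> Taut ar m L1 \<longleftrightarrow> G \<in> Taut ar m L1" "F \<in> Taut ar m L2 \<longleftrightarrow> G \<in> Taut ar m L2"
proof -
  have "evalf (snd L1) (list_valuation ws) F = evalf (snd L1) (list_valuation ws) G"
    "evalf (snd L2) (list_valuation ws) F = evalf (snd L2) (list_valuation ws) G"
    if "ws \<in> assignments m m" for ws
    using fun_cong[OF eq, of ws] that by (simp_all add: joint_table_def)
  then show "F \<in> Taut ar m L1 \<longleftrightarrow> G \<in> Taut ar m L1" "F \<in> Taut ar m L2 \<longleftrightarrow> G \<in> Taut ar m L2"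
    unfolding mem_Taut_iff_assignments[OF m F(2)] mem_Taut_iff_assignments[OF m G(2)]
    using F(1) G(1) by auto
qed

theorem Taut_subset_iff_bounded_forms:
  assumes m: "1 \<le> m" and L: "is_logic ar m L1" "is_logic ar m L2"
  shows "Taut ar m L1 \<subseteq> Taut ar m L2 \<longleftrightarrow>
    (\<forall>F. bounded_form ar m ((m * m) ^ (m ^ m)) F \<and> F \<in> Taut ar m L1 \<longrightarrow> F \<in> Taut ar m L2)"
proof (intro iffI allI impI)
  assume bounded: "\<forall>F. bounded_form ar m ((m * m) ^ (m ^ m)) F \<and> F \<in> Taut ar m L1 \<longrightarrow> F \<in> Taut ar m L2"
  show "Taut ar m L1 \<subseteq> Taut ar m L2"
    unfolding Taut_subset_iff_few_vars[OF m]
  proof (intro ballI impI)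
    fix F assume F1: "F \<in> Taut ar m L1" and F_vars: "vars F \<subseteq> {..<m}"
    then have F_wf: "wf_form ar F" by (simp add: Taut_def)
    then have "bounded_form ar m (depth F) F" using F_vars by (simp add: bounded_form_def)
    then have "joint_table m L1 L2 F \<in> joint_tables ar m L1 L2 ((m * m) ^ (m ^ m))"
      using joint_tables_subset_depth_bound[OF m L] unfolding joint_tables_def by blast
    then obtain G where G: "bounded_form ar m ((m * m) ^ (m ^ m)) G"
      "joint_table m L1 L2 F = joint_table m L1 L2 G"
      unfolding joint_tables_def by auto
    have G_wf: "wf_form ar G" "vars G \<subseteq> {..<m}" using G(1) by (simp_all add: bounded_form_def)
    note same = mem_Taut_iff_joint_table_eq[OF m G(2) F_wf F_vars G_wf]
    have "G \<in> Taut ar m L1" using F1 same(1) by simp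
    with bounded G(1) have "G \<in> Taut ar m L2" by simp
    with same(2) show "F \<in> Taut ar m L2" by simp
  qed
qed auto

section \<open>Bounding the codes to be searched\<close>

fun enc_form_bound :: "nat \<Rightarrow> nat \<Rightarrow> nat \<Rightarrow> nat \<Rightarrow> nat" where
  "enc_form_bound k s n 0 = pair 0 n"
| "enc_form_bound k s n (Suc d) =
     enc_form_bound k s n d + pair 1 (pair k (list_encode (replicate s (enc_form_bound k s n d))))"

lemma enc_form_bound_mono: "d \<le> d' \<Longrightarrow> enc_form_bound k s n d \<le> enc_form_bound k s n d'"
  by (induction d') (auto simp: le_Suc_eq)

lemma enc_form_le_bound: "bounded_form ar n d F \<Longrightarrow> enc_form F \<le> enc_form_bound (length ar) (sum_list ar) n d"
proof (induction F arbitrary: d)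
  case (Var x)
  then have "enc_form (Var x) \<le> enc_form_bound (length ar) (sum_list ar) n 0"
    by (simp add: bounded_form_def enc_form_Var pair_mono)
  also have "\<dots> \<le> enc_form_bound (length ar) (sum_list ar) n d"
    by (rule enc_form_bound_mono) simp
  finally show ?case .
next
  case (App c fs)
  let ?B = "enc_form_bound (length ar) (sum_list ar) n"
  from App.prems obtain d' where d: "d = Suc d'" by (cases d) (auto simp: bounded_form_def)
  have wf: "c < length ar" "length fs = ar ! c"
    using App.prems by (auto simp: bounded_form_def)
  have "enc_form f \<le> ?B d'" if f: "f \<in> set fs" for f
  proof (rule App.IH[OF f])
    show "bounded_form ar n d' f"
      using App.prems f d depth_child_less[OF f, of c] by (auto simp: bounded_form_def)
  qed
  moreover have "length fs \<le> sum_list ar" using wf elem_le_sum_list[of c ar] by simp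
  ultimately have "list_encode (map enc_form fs) \<le> list_encode (replicate (sum_list ar) (?B d'))"
    by (intro list_encode_le_replicate) auto
  with wf have "enc_form (App c fs) \<le> pair 1 (pair (length ar) (list_encode (replicate (sum_list ar) (?B d'))))"
    unfolding enc_form_App by (intro pair_mono) auto
  then show ?case using d by simp
qed

lemma computable_enc_form_bound:
  assumes "computable f" "computable g" "computable h" "computable k"
  shows "computable (\<lambda>x. enc_form_bound (f x) (g x) (h x) (k x))"
proof -
  let ?step = "\<lambda>s. pair (unpair1 s) (pair (unpair1 (unpair2 s)) (unpair2 (unpair2 s) +
      pair 1 (pair (unpair1 s) (list_encode (replicate (unpair1 (unpair2 s)) (unpair2 (unpair2 s)))))))"
  have iter: "(?step ^^ d) (pair a (pair b (pair 0 c))) = pair a (pair b (enc_form_bound a b c d))"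
    for a b c d
    by (induction d) simp_all
  have step: "computable ?step"
    by (intro computable_pair computable_unpair1 computable_unpair2 computable_add
        computable_list_encode_replicate computable_const computable_id)
  have "computable (\<lambda>x. unpair2 (unpair2 ((?step ^^ k x) (pair (f x) (pair (g x) (pair 0 (h x)))))))"
    by (intro computable_unpair2 computable_funpow[OF step assms(4)] computable_pair assms(1-3)
        computable_const)
  then show ?thesis unfolding iter by simp
qed

definition arg_tuples :: "nat list \<Rightarrow> nat \<Rightarrow> (nat \<times> nat list) list" where
  "arg_tuples ar m =
     concat (map (\<lambda>c. map (\<lambda>a. (c, a)) (List.n_lists (ar ! c) [1..<Suc m])) [0..<length ar])"

lemma mem_arg_tuples:
  "(c, a) \<in> set (arg_tuples ar m) \<longleftrightarrow> c < length ar \<and> length a = ar ! c \<and> set a \<subseteq> {1..m}"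
proof -
  have "(c, a) \<in> set (arg_tuples ar m) \<longleftrightarrow> c < length ar \<and> a \<in> set (List.n_lists (ar ! c) [1..<Suc m])"
    unfolding arg_tuples_def by auto
  also have "\<dots> \<longleftrightarrow> c < length ar \<and> length a = ar ! c \<and> set a \<subseteq> set [1..<Suc m]"
    by (simp only: set_n_lists mem_Collect_eq)
  also have "set [1..<Suc m] = {1..m}" by auto
  finally show ?thesis .
qed

lemma length_arg_tuples: "1 \<le> m \<Longrightarrow> length (arg_tuples ar m) \<le> length ar * m ^ sum_list ar"
proof -
  assume m: "1 \<le> m"
  have "length (arg_tuples ar m) = (\<Sum>c\<leftarrow>[0..<length ar]. m ^ (ar ! c))"
    unfolding arg_tuples_def using m by (simp add: length_concat length_n_lists comp_def)
  also have "\<dots> \<le> (\<Sum>c\<leftarrow>[0..<length ar]. m ^ sum_list ar)"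
    by (rule sum_list_mono, rule power_increasing) (use m in \<open>auto simp: elem_le_sum_list\<close>)
  also have "\<dots> = length ar * m ^ sum_list ar" by (simp add: sum_list_triv)
  finally show ?thesis .
qed

definition canonical_code :: "nat list \<Rightarrow> nat \<Rightarrow> logic \<Rightarrow> logic_code" where
  "canonical_code ar m M =
     (sorted_list_of_set (fst M), map (\<lambda>ca. (ca, snd M (fst ca) (snd ca))) (arg_tuples ar m))"

lemma map_of_map_graph: "map_of (map (\<lambda>k. (k, f k)) ks) k = (if k \<in> set ks then Some (f k) else None)"
  by (induction ks) auto

lemma same_logic_canonical_code:
  assumes "is_logic ar m M"
  shows "same_logic ar m M (logic_of_code (canonical_code ar m M))"
proof -
  have "finite (fst M)" using assms by (auto simp: is_logic_def intro: finite_subset)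
  then show ?thesis
    by (auto simp: same_logic_def logic_of_code_def canonical_code_def mem_arg_tuples
        map_of_map_graph[where f = "\<lambda>ca. snd M (fst ca) (snd ca)", simplified])
qed

definition logic_code_bound :: "nat \<Rightarrow> nat \<Rightarrow> nat \<Rightarrow> nat" where
  "logic_code_bound k s m = pair (list_encode (replicate m m))
     (list_encode (replicate (k * m ^ s) (pair (pair k (list_encode (replicate s m))) m)))"

lemma enc_code_canonical_code_le:
  assumes L: "is_logic ar m M" and m: "1 \<le> m"
  shows "enc_code (canonical_code ar m M) \<le> logic_code_bound (length ar) (sum_list ar) m"
proof -
  let ?e = "pair (pair (length ar) (list_encode (replicate (sum_list ar) m))) m"
  let ?tbl = "map (\<lambda>ca. (ca, snd M (fst ca) (snd ca))) (arg_tuples ar m)"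
  have D: "fst M \<subseteq> {1..m}" using L by (simp add: is_logic_def)
  then have "finite (fst M)" by (rule finite_subset) simp
  with D have "list_encode (sorted_list_of_set (fst M)) \<le> list_encode (replicate m m)"
    using card_mono[OF _ D] by (intro list_encode_le_replicate) auto
  moreover have "e \<le> ?e" if "e \<in> set (map enc_entry ?tbl)" for e
  proof -
    from that obtain c a where ca: "(c, a) \<in> set (arg_tuples ar m)" "e = enc_entry ((c, a), snd M c a)"
      by auto
    then have c: "c < length ar" "length a = ar ! c" "set a \<subseteq> {1..m}"
      by (simp_all add: mem_arg_tuples)
    with L have "snd M c a \<le> m" by (auto simp: is_logic_def)
    moreover have "list_encode a \<le> list_encode (replicate (sum_list ar) m)"
      using c elem_le_sum_list[of c ar] by (intro list_encode_le_replicate) auto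
    ultimately show ?thesis using c ca(2) by (simp add: enc_entry_eq pair_mono)
  qed
  then have "list_encode (map enc_entry ?tbl) \<le> list_encode (replicate (length ar * m ^ sum_list ar) ?e)"
    using length_arg_tuples[OF m] by (intro list_encode_le_replicate) auto
  ultimately show ?thesis
    by (simp add: enc_code_eq logic_code_bound_def canonical_code_def pair_mono)
qed

lemma computable_logic_code_bound:
  "computable f \<Longrightarrow> computable g \<Longrightarrow> computable h \<Longrightarrow> computable (\<lambda>x. logic_code_bound (f x) (g x) (h x))"
  unfolding logic_code_bound_def
  by (intro computable_pair computable_list_encode_replicate computable_mult computable_power)

definition dec_code :: "nat \<Rightarrow> logic_code" where
  "dec_code z = (list_decode (unpair1 z),
     map (\<lambda>e. ((unpair1 (unpair1 e), list_decode (unpair2 (unpair1 e))), unpair2 e)) (list_decode (unpair2 z)))"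

lemma enc_code_dec_code: "enc_code (dec_code z) = z"
  by (simp add: enc_code_eq dec_code_def enc_entry_eq comp_def)

lemma inj_enc_code: "inj enc_code"
proof (rule injI)
  fix k k' assume "enc_code k = enc_code k'"
  moreover have "inj enc_entry"
    by (rule injI) (simp add: enc_entry_eq list_encode_eq prod_eq_iff)
  ultimately show "k = k'"
    by (simp add: enc_code_eq list_encode_eq inj_map_eq_map prod_eq_iff)
qed

lemma dec_code_enc_code: "dec_code (enc_code k) = k"
  using injD[OF inj_enc_code enc_code_dec_code] .

section \<open>Invariance under \<^const>\<open>same_logic\<close>\<close>

lemma evalf_same_logic:
  assumes L: "is_logic ar m M" and S: "same_logic ar m M M'" and v: "valuation m v"
  shows "wf_form ar F \<Longrightarrow> evalf (snd M) v F = evalf (snd M') v F"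
proof (induction F)
  case (App c fs)
  then have args: "map (evalf (snd M) v) fs = map (evalf (snd M') v) fs" by auto
  have "set (map (evalf (snd M) v) fs) \<subseteq> {1..m}"
    using evalf_in_values[OF L] v App.prems by (auto simp: valuation_def)
  with S App.prems have "snd M c (map (evalf (snd M) v) fs) = snd M' c (map (evalf (snd M) v) fs)"
    by (simp add: same_logic_def)
  then show ?case unfolding evalf.simps args .
qed simp

lemma satisfies_same_logic:
  assumes "is_logic ar m M" "same_logic ar m M M'" "valuation m v" "wf_form ar F"
  shows "satisfies M v F \<longleftrightarrow> satisfies M' v F"
  using evalf_same_logic[OF assms] assms(2) by (simp add: satisfies_def same_logic_def)

lemma Taut_same_logic: "is_logic ar m M \<Longrightarrow> same_logic ar m M M' \<Longrightarrow> Taut ar m M = Taut ar m M'"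
  using satisfies_same_logic unfolding Taut_def by blast

lemma is_logic_same_logic: "is_logic ar m M \<Longrightarrow> same_logic ar m M M' \<Longrightarrow> is_logic ar m M'"
  unfolding is_logic_def same_logic_def by auto

lemma is_cover_same_logic:
  assumes W: "wf_calc ar axs rls" and L: "is_logic ar m M" and S: "same_logic ar m M M'"
  shows "is_cover ar m axs rls M \<longleftrightarrow> is_cover ar m axs rls M'"
proof -
  have "(\<forall>v. valuation m v \<longrightarrow> (\<forall>p\<in>set ps. satisfies M v p) \<longrightarrow> satisfies M v c) \<longleftrightarrow>
      (\<forall>v. valuation m v \<longrightarrow> (\<forall>p\<in>set ps. satisfies M' v p) \<longrightarrow> satisfies M' v c)"
    if "(ps, c) \<in> set rls" for ps c
    using W that satisfies_same_logic[OF L S] unfolding wf_calc_def by fastforce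
  then show ?thesis
    unfolding is_cover_def Taut_same_logic[OF L S] by (auto simp: case_prod_beta)
qed

lemma minimal_cover_same_logic:
  assumes "wf_calc ar axs rls" "is_logic ar m M" "same_logic ar m M M'"
  shows "minimal_cover ar m axs rls M \<longleftrightarrow> minimal_cover ar m axs rls M'"
  using assms is_logic_same_logic[OF assms(2,3)]
  unfolding minimal_cover_def lhd_def Taut_same_logic[OF assms(2,3)] is_cover_same_logic[OF assms]
  by blast

definition input_arities :: "nat \<Rightarrow> nat" where "input_arities x = code_nth x 0"
definition input_axioms :: "nat \<Rightarrow> nat" where "input_axioms x = code_nth x 1"
definition input_rules :: "nat \<Rightarrow> nat" where "input_rules x = code_nth x 2"
definition input_values :: "nat \<Rightarrow> nat" where "input_values x = code_nth x 3"

lemma input_enc_input: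
  "input_arities (enc_input ar axs rls m) = list_encode ar"
  "input_axioms (enc_input ar axs rls m) = list_encode (map enc_form axs)"
  "input_rules (enc_input ar axs rls m) = list_encode (map enc_rule rls)"
  "input_values (enc_input ar axs rls m) = m"
  unfolding input_arities_def input_axioms_def input_rules_def input_values_def enc_input_def
  by (simp_all add: numeral_eq_Suc del: list_encode.simps)

definition code_sum_list :: "nat \<Rightarrow> nat" where
  "code_sum_list l = (\<Sum>i<code_length l. code_nth l i)"

lemma code_sum_list_list_encode: "code_sum_list (list_encode xs) = sum_list xs"
  unfolding code_sum_list_def by (simp add: sum_list_sum_nth atLeast0LessThan)

definition code_is_logic :: "nat \<Rightarrow> nat \<Rightarrow> bool" where
  "code_is_logic x z \<longleftrightarrow>
     (\<forall>i<code_length (unpair1 z). 1 \<le> code_nth (unpair1 z) i \<and> code_nth (unpair1 z) i \<le> input_values x) \<and>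
     (\<forall>c<code_length (input_arities x).
        \<forall>a<Suc (list_encode (replicate (code_nth (input_arities x) c) (input_values x))).
          code_assignment (code_nth (input_arities x) c) (input_values x) a \<longrightarrow>
            1 \<le> code_lookup (unpair2 z) (pair c a) \<and> code_lookup (unpair2 z) (pair c a) \<le> input_values x)"

text \<open>The variables of a formula are bounded by its code, so the axioms and rules mention
  only the variables below \<open>x + 1\<close>, where \<open>x\<close> is the code of the input.\<close>

definition code_is_cover :: "nat \<Rightarrow> nat \<Rightarrow> bool" where
  "code_is_cover x z \<longleftrightarrow>
     (\<forall>i<code_length (input_axioms x). code_Taut z (input_values x) (Suc x) (code_nth (input_axioms x) i)) \<and>
     (\<forall>i<code_length (input_rules x). code_sound_rule z (input_values x) (Suc x) (code_nth (input_rules x) i))"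

definition code_Taut_subset :: "nat \<Rightarrow> nat \<Rightarrow> nat \<Rightarrow> bool" where
  "code_Taut_subset x z1 z2 \<longleftrightarrow>
     (\<forall>j<Suc (enc_form_bound (code_length (input_arities x)) (code_sum_list (input_arities x))
                (input_values x) ((input_values x * input_values x) ^ (input_values x ^ input_values x))).
        code_wf_form (input_arities x) (input_values x) j = 1 \<and> code_Taut z1 (input_values x) (input_values x) j
        \<longrightarrow> code_Taut z2 (input_values x) (input_values x) j)"

definition code_cover :: "nat \<Rightarrow> nat \<Rightarrow> bool" where
  "code_cover x z \<longleftrightarrow> code_is_logic x z \<and> code_is_cover x z"

definition search_bound :: "nat \<Rightarrow> nat" where
  "search_bound x =
     logic_code_bound (code_length (input_arities x)) (code_sum_list (input_arities x)) (input_values x)"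

definition code_minimal_cover :: "nat \<Rightarrow> nat \<Rightarrow> bool" where
  "code_minimal_cover x z \<longleftrightarrow> code_cover x z \<and>
     \<not> (\<exists>z'<Suc (search_bound x). code_cover x z' \<and> code_Taut_subset x z' z \<and> \<not> code_Taut_subset x z z')"

definition minimal_cover_codes :: "nat \<Rightarrow> nat" where
  "minimal_cover_codes x = code_rev_filter_upt (\<lambda>z x. code_minimal_cover x z) x (Suc (search_bound x))"

lemma computable_input:
  "computable f \<Longrightarrow> computable (\<lambda>x. input_arities (f x))"
  "computable f \<Longrightarrow> computable (\<lambda>x. input_axioms (f x))"
  "computable f \<Longrightarrow> computable (\<lambda>x. input_rules (f x))"
  "computable f \<Longrightarrow> computable (\<lambda>x. input_values (f x))"
  unfolding input_arities_def input_axioms_def input_rules_def input_values_def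
  by (intro computable_code_nth computable_const; assumption)+

lemma computable_code_sum_list: "computable f \<Longrightarrow> computable (\<lambda>x. code_sum_list (f x))"
proof -
  assume f: "computable f"
  have "computable code_sum_list"
    unfolding code_sum_list_def[abs_def]
    by (rule computable_sum_lessThan) (intro computable_code_nth computable_unpair1 computable_unpair2
        computable_id computable_code_length)+
  from computable_comp[OF this f] show ?thesis .
qed

lemma decidable_code_cover: "decidable (\<lambda>y. code_cover (unpair1 y) (unpair2 y))"
proof -
  have "decidable (\<lambda>y. code_is_logic (unpair1 y) (unpair2 y))"
    unfolding code_is_logic_def
    by (intro decidable_conj decidable_all_less decidable_le decidable_imp computable_code_nth
        computable_code_length computable_unpair1 computable_unpair2 computable_id computable_const
        computable_input computable_Suc computable_list_encode_replicate
        decidable_compose_uncurried3[OF decidable_code_assignment] computable_code_lookup computable_pair)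
  moreover have "decidable (\<lambda>y. code_is_cover (unpair1 y) (unpair2 y))"
    unfolding code_is_cover_def
    by (intro decidable_conj decidable_all_less decidable_compose_uncurried4[OF decidable_code_Taut]
        decidable_compose_uncurried4[OF decidable_code_sound_rule] computable_code_nth
        computable_code_length computable_unpair1 computable_unpair2 computable_id computable_input
        computable_Suc)
  ultimately show ?thesis unfolding code_cover_def by (rule decidable_conj)
qed

lemma decidable_code_Taut_subset:
  "decidable (\<lambda>y. code_Taut_subset (unpair1 y) (unpair1 (unpair2 y)) (unpair2 (unpair2 y)))"
  unfolding code_Taut_subset_def
  by (intro decidable_all_less decidable_imp decidable_conj decidable_eq
      decidable_compose_uncurried4[OF decidable_code_Taut] computable_code_wf_form computable_Suc
      computable_enc_form_bound computable_code_length computable_code_sum_list computable_power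
      computable_mult computable_unpair1 computable_unpair2 computable_id computable_input
      computable_const)

lemma computable_minimal_cover_codes: "computable minimal_cover_codes"
proof -
  have bound: "computable (\<lambda>x. search_bound (f x))" if "computable f" for f
    unfolding search_bound_def
    by (intro computable_logic_code_bound computable_code_length computable_code_sum_list
        computable_input that)
  have "decidable (\<lambda>y. code_minimal_cover (unpair1 y) (unpair2 y))"
    unfolding code_minimal_cover_def
    by (intro decidable_conj decidable_code_cover decidable_not decidable_ex_less
        decidable_compose_uncurried[OF decidable_code_cover]
        decidable_compose_uncurried3[OF decidable_code_Taut_subset] computable_Suc bound
        computable_unpair1 computable_unpair2 computable_id)
  then have "decidable (\<lambda>y. code_minimal_cover (unpair2 y) (unpair1 y))"
    by (rule decidable_compose_uncurried) (intro computable_unpair1 computable_unpair2 computable_id)+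
  then show ?thesis
    unfolding minimal_cover_codes_def[abs_def]
    by (rule computable_code_rev_filter_upt[where P = "\<lambda>z x. code_minimal_cover x z",
          OF _ computable_Suc[OF bound[OF computable_id]]])
qed

context
  fixes ar axs rls m x
  assumes x: "x = enc_input ar axs rls m"
begin

lemmas input_x = input_enc_input[of ar axs rls m, folded x]

lemma code_is_logic_iff: "code_is_logic x (enc_code k) \<longleftrightarrow> is_logic ar m (logic_of_code k)"
proof -
  have designated: "(\<forall>i<code_length (unpair1 (enc_code k)).
        1 \<le> code_nth (unpair1 (enc_code k)) i \<and> code_nth (unpair1 (enc_code k)) i \<le> m)
      \<longleftrightarrow> fst (logic_of_code k) \<subseteq> {1..m}"
  proof -
    have "(\<forall>i<code_length (unpair1 (enc_code k)).
        1 \<le> code_nth (unpair1 (enc_code k)) i \<and> code_nth (unpair1 (enc_code k)) i \<le> m)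
      \<longleftrightarrow> (\<forall>i<length (fst k). 1 \<le> fst k ! i \<and> fst k ! i \<le> m)"
      by (simp add: enc_code_eq)
    also have "\<dots> \<longleftrightarrow> (\<forall>a\<in>set (fst k). 1 \<le> a \<and> a \<le> m)"
      by (simp only: all_set_conv_all_nth)
    finally show ?thesis by (auto simp: logic_of_code_def)
  qed
  have "(\<forall>a<Suc (list_encode (replicate (ar ! c) m)). code_assignment (ar ! c) m a \<longrightarrow>
        1 \<le> code_lookup (unpair2 (enc_code k)) (pair c a) \<and> code_lookup (unpair2 (enc_code k)) (pair c a) \<le> m)
      \<longleftrightarrow> (\<forall>args. length args = ar ! c \<and> set args \<subseteq> {1..m} \<longrightarrow> snd (logic_of_code k) c args \<in> {1..m})"
    for c
    by (simp add: all_code_assignments_iff assignments_def enc_code_eq code_lookup_enc_entries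
        logic_of_code_def)
  then show ?thesis
    unfolding code_is_logic_def is_logic_def input_x designated by simp
qed

lemma enc_form_less_enc_input:
  assumes "F \<in> set axs \<or> (\<exists>ps c. (ps, c) \<in> set rls \<and> F \<in> set ps \<union> {c})"
  shows "enc_form F < x"
  using assms
proof
  assume "F \<in> set axs"
  then have "enc_form F < list_encode (map enc_form axs)" by (intro less_list_encode) simp
  also have "\<dots> < x" unfolding x enc_input_def by (intro less_list_encode) simp
  finally show ?thesis .
next
  assume "\<exists>ps c. (ps, c) \<in> set rls \<and> F \<in> set ps \<union> {c}"
  then obtain ps c where r: "(ps, c) \<in> set rls" and F: "F \<in> set ps \<union> {c}" by blast
  from F have "enc_form F \<le> enc_rule (ps, c)"
  proof
    assume "F \<in> set ps"
    then have "enc_form F < list_encode (map enc_form ps)" by (intro less_list_encode) simp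
    then show ?thesis unfolding enc_rule_eq using le_pair1 by (blast intro: less_imp_le le_trans)
  qed (simp add: enc_rule_eq le_pair2)
  also have "enc_rule (ps, c) < list_encode (map enc_rule rls)" using r by (intro less_list_encode) force
  also have "\<dots> < x" unfolding x enc_input_def by (intro less_list_encode) simp
  finally show ?thesis .
qed

lemma vars_calc_subset:
  assumes "F \<in> set axs \<or> (\<exists>ps c. (ps, c) \<in> set rls \<and> F \<in> set ps \<union> {c})"
  shows "vars F \<subseteq> {..<Suc x}"
  using var_le_enc_form enc_form_less_enc_input[OF assms] by fastforce

lemma code_is_cover_iff:
  assumes W: "wf_calc ar axs rls" and m: "1 \<le> m"
  shows "code_is_cover x (enc_code k) \<longleftrightarrow> is_cover ar m axs rls (logic_of_code k)"
proof -
  have "code_Taut (enc_code k) m (Suc x) (enc_form a) \<longleftrightarrow> a \<in> Taut ar m (logic_of_code k)"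
    if "a \<in> set axs" for a
    using that W vars_calc_subset[of a] by (intro code_Taut_enc_form[OF m]) (auto simp: wf_calc_def)
  then have axioms_iff: "(\<forall>i<length axs. code_Taut (enc_code k) m (Suc x) (enc_form (axs ! i))) \<longleftrightarrow>
      (\<forall>a\<in>set axs. a \<in> Taut ar m (logic_of_code k))"
    by (auto simp: all_set_conv_all_nth)
  have rule_iff: "code_sound_rule (enc_code k) m (Suc x) (enc_rule r) \<longleftrightarrow>
      (case r of (ps, c) \<Rightarrow> \<forall>v. valuation m v \<longrightarrow> (\<forall>p\<in>set ps. satisfies (logic_of_code k) v p) \<longrightarrow>
         satisfies (logic_of_code k) v c)"
    if r: "r \<in> set rls" for r
  proof (cases r)
    case (Pair ps c)
    with r have "\<forall>F\<in>set ps \<union> {c}. vars F \<subseteq> {..<Suc x}" using vars_calc_subset by blast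
    with Pair show ?thesis by (simp add: code_sound_rule_enc_rule[OF m])
  qed
  have rules_iff: "(\<forall>i<length rls. code_sound_rule (enc_code k) m (Suc x) (enc_rule (rls ! i))) \<longleftrightarrow>
      (\<forall>(ps, c)\<in>set rls. \<forall>v. valuation m v \<longrightarrow> (\<forall>p\<in>set ps. satisfies (logic_of_code k) v p) \<longrightarrow>
         satisfies (logic_of_code k) v c)"
  proof -
    from rule_iff have "(\<forall>r\<in>set rls. code_sound_rule (enc_code k) m (Suc x) (enc_rule r)) \<longleftrightarrow>
      (\<forall>(ps, c)\<in>set rls. \<forall>v. valuation m v \<longrightarrow> (\<forall>p\<in>set ps. satisfies (logic_of_code k) v p) \<longrightarrow>
         satisfies (logic_of_code k) v c)"
      by (rule ball_cong[OF refl])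
    then show ?thesis unfolding all_set_conv_all_nth .
  qed
  show ?thesis
    unfolding code_is_cover_def is_cover_def input_x using axioms_iff rules_iff by simp
qed

lemma code_cover_iff:
  assumes "wf_calc ar axs rls" "1 \<le> m"
  shows "code_cover x (enc_code k) \<longleftrightarrow>
    is_logic ar m (logic_of_code k) \<and> is_cover ar m axs rls (logic_of_code k)"
  unfolding code_cover_def code_is_logic_iff code_is_cover_iff[OF assms] ..

lemma code_Taut_subset_iff:
  assumes m: "1 \<le> m" and L: "is_logic ar m (logic_of_code k1)" "is_logic ar m (logic_of_code k2)"
  shows "code_Taut_subset x (enc_code k1) (enc_code k2) \<longleftrightarrow>
    Taut ar m (logic_of_code k1) \<subseteq> Taut ar m (logic_of_code k2)"
proof -
  let ?K = "(m * m) ^ (m ^ m)"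
  have "code_Taut_subset x (enc_code k1) (enc_code k2) \<longleftrightarrow>
      (\<forall>j<Suc (enc_form_bound (length ar) (sum_list ar) m ?K).
         (\<exists>F. j = enc_form F \<and> wf_form ar F \<and> vars F \<subseteq> {..<m}) \<and> code_Taut (enc_code k1) m m j
         \<longrightarrow> code_Taut (enc_code k2) m m j)" (is "_ \<longleftrightarrow> ?codes")
    unfolding code_Taut_subset_def input_x code_sum_list_list_encode code_wf_form_eq_1_iff
    by simp
  also have "?codes \<longleftrightarrow> Taut ar m (logic_of_code k1) \<subseteq> Taut ar m (logic_of_code k2)"
  proof
    assume codes: ?codes
    show "Taut ar m (logic_of_code k1) \<subseteq> Taut ar m (logic_of_code k2)"
      unfolding Taut_subset_iff_bounded_forms[OF m L]
    proof (intro allI impI, elim conjE)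
      fix F assume F: "bounded_form ar m ?K F" "F \<in> Taut ar m (logic_of_code k1)"
      then have wf: "wf_form ar F" "vars F \<subseteq> {..<m}" by (simp_all add: bounded_form_def)
      have "enc_form F < Suc (enc_form_bound (length ar) (sum_list ar) m ?K)"
        using enc_form_le_bound[OF F(1)] by simp
      moreover have "code_Taut (enc_code k1) m m (enc_form F)"
        using F(2) code_Taut_enc_form[OF m wf] by simp
      ultimately have "code_Taut (enc_code k2) m m (enc_form F)"
        using codes wf by blast
      then show "F \<in> Taut ar m (logic_of_code k2)"
        using code_Taut_enc_form[OF m wf] by simp
    qed
  next
    assume "Taut ar m (logic_of_code k1) \<subseteq> Taut ar m (logic_of_code k2)"
    then show ?codes by (auto simp: code_Taut_enc_form[OF m])
  qed
  finally show ?thesis .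
qed

lemma enc_canonical_code_less_search_bound:
  "is_logic ar m M \<Longrightarrow> 1 \<le> m \<Longrightarrow> enc_code (canonical_code ar m M) < Suc (search_bound x)"
  using enc_code_canonical_code_le
  by (simp add: search_bound_def input_x code_sum_list_list_encode le_imp_less_Suc)

lemma code_minimal_cover_iff:
  assumes W: "wf_calc ar axs rls" and m: "1 \<le> m"
  shows "code_minimal_cover x (enc_code k) \<longleftrightarrow> minimal_cover ar m axs rls (logic_of_code k)"
proof
  assume min: "code_minimal_cover x (enc_code k)"
  then have L: "is_logic ar m (logic_of_code k)" and C: "is_cover ar m axs rls (logic_of_code k)"
    by (simp_all add: code_minimal_cover_def code_cover_iff[OF W m])
  show "minimal_cover ar m axs rls (logic_of_code k)"
    unfolding minimal_cover_def
  proof (intro conjI L C notI, elim exE conjE)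
    fix M' assume L': "is_logic ar m M'" and C': "is_cover ar m axs rls M'"
      and less: "lhd ar m M' (logic_of_code k)"
    let ?k' = "canonical_code ar m M'"
    have S: "same_logic ar m M' (logic_of_code ?k')" by (rule same_logic_canonical_code[OF L'])
    have L'': "is_logic ar m (logic_of_code ?k')" by (rule is_logic_same_logic[OF L' S])
    have "code_cover x (enc_code ?k')"
      using C' L'' is_cover_same_logic[OF W L' S] by (simp add: code_cover_iff[OF W m])
    moreover have "enc_code ?k' < Suc (search_bound x)"
      by (rule enc_canonical_code_less_search_bound[OF L' m])
    moreover have "code_Taut_subset x (enc_code ?k') (enc_code k)"
      "\<not> code_Taut_subset x (enc_code k) (enc_code ?k')"
      using less Taut_same_logic[OF L' S]
      by (auto simp: lhd_def code_Taut_subset_iff[OF m L'' L] code_Taut_subset_iff[OF m L L''])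
    ultimately show False using min unfolding code_minimal_cover_def by blast
  qed
next
  assume min: "minimal_cover ar m axs rls (logic_of_code k)"
  then have L: "is_logic ar m (logic_of_code k)"
    by (simp add: minimal_cover_def)
  show "code_minimal_cover x (enc_code k)"
    unfolding code_minimal_cover_def
  proof (intro conjI notI)
    show "code_cover x (enc_code k)"
      using min by (simp add: minimal_cover_def code_cover_iff[OF W m])
  next
    assume "\<exists>z'<Suc (search_bound x). code_cover x z' \<and> code_Taut_subset x z' (enc_code k) \<and>
        \<not> code_Taut_subset x (enc_code k) z'"
    then obtain k' where cover: "code_cover x (enc_code k')"
      and subset: "code_Taut_subset x (enc_code k') (enc_code k)" "\<not> code_Taut_subset x (enc_code k) (enc_code k')"
      by (metis enc_code_dec_code)
    then have L': "is_logic ar m (logic_of_code k')" "is_cover ar m axs rls (logic_of_code k')"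
      by (simp_all add: code_cover_iff[OF W m])
    with subset have "lhd ar m (logic_of_code k') (logic_of_code k)"
      by (auto simp: lhd_def code_Taut_subset_iff[OF m L'(1) L] code_Taut_subset_iff[OF m L L'(1)])
    with min L' show False unfolding minimal_cover_def by blast
  qed
qed

lemma minimal_cover_codes_correct:
  assumes W: "wf_calc ar axs rls" and m: "1 \<le> m"
  shows "\<exists>ks. minimal_cover_codes x = list_encode (map enc_code ks) \<and>
    (\<forall>k\<in>set ks. minimal_cover ar m axs rls (logic_of_code k)) \<and>
    (\<forall>M. minimal_cover ar m axs rls M \<longrightarrow> (\<exists>k\<in>set ks. same_logic ar m M (logic_of_code k)))"
proof -
  define ks where "ks = map dec_code (rev (filter (code_minimal_cover x) [0..<Suc (search_bound x)]))"
  have mem_ks: "k \<in> set ks \<longleftrightarrow> code_minimal_cover x (enc_code k) \<and> enc_code k < Suc (search_bound x)"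
    for k
    unfolding ks_def by (auto simp: enc_code_dec_code dec_code_enc_code simp del: upt_Suc
        intro!: image_eqI[where x = "enc_code k"])
  have "minimal_cover_codes x = list_encode (map enc_code ks)"
    by (simp add: ks_def minimal_cover_codes_def code_rev_filter_upt_eq comp_def enc_code_dec_code)
  moreover have "\<forall>k\<in>set ks. minimal_cover ar m axs rls (logic_of_code k)"
    by (simp add: mem_ks code_minimal_cover_iff[OF W m])
  moreover have "\<exists>k\<in>set ks. same_logic ar m M (logic_of_code k)"
    if min: "minimal_cover ar m axs rls M" for M
  proof
    have L: "is_logic ar m M" using min by (simp add: minimal_cover_def)
    show S: "same_logic ar m M (logic_of_code (canonical_code ar m M))"
      by (rule same_logic_canonical_code[OF L])
    show "canonical_code ar m M \<in> set ks"
      using min enc_canonical_code_less_search_bound[OF L m]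
      by (simp add: mem_ks code_minimal_cover_iff[OF W m] minimal_cover_same_logic[OF W L S])
  qed
  ultimately show ?thesis by blast
qed

end

theorem proposition6:
  shows "\<exists>p::recf. \<forall>ar axs rls m. wf_calc ar axs rls \<and> m \<ge> 1 \<longrightarrow>
     (\<exists>ks::logic_code list.
        rf_eval p [enc_input ar axs rls m] (list_encode (map enc_code ks)) \<and>
        (\<forall>k\<in>set ks. minimal_cover ar m axs rls (logic_of_code k)) \<and>
        (\<forall>M. minimal_cover ar m axs rls M \<longrightarrow>
             (\<exists>k\<in>set ks. same_logic ar m M (logic_of_code k))))"
proof -
  obtain p where p: "\<forall>x. rf_eval p [x] (minimal_cover_codes x)"
    using computable_minimal_cover_codes unfolding computable_def by blast
  show ?thesis
  proof (rule exI[of _ p], intro allI impI)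
    fix ar axs rls and m :: nat assume "wf_calc ar axs rls \<and> m \<ge> 1"
    then obtain ks where "minimal_cover_codes (enc_input ar axs rls m) = list_encode (map enc_code ks)"
      "\<forall>k\<in>set ks. minimal_cover ar m axs rls (logic_of_code k)"
      "\<forall>M. minimal_cover ar m axs rls M \<longrightarrow> (\<exists>k\<in>set ks. same_logic ar m M (logic_of_code k))"
      using minimal_cover_codes_correct[OF refl] by blast
    with p show "\<exists>ks. rf_eval p [enc_input ar axs rls m] (list_encode (map enc_code ks)) \<and>
        (\<forall>k\<in>set ks. minimal_cover ar m axs rls (logic_of_code k)) \<and>
        (\<forall>M. minimal_cover ar m axs rls M \<longrightarrow> (\<exists>k\<in>set ks. same_logic ar m M (logic_of_code k)))"
      by metis
  qed
qed

end
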